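(* Let $n\ge 4$, $a>1$, and $f_a(z)=\frac{a}{n+1}z^{n+1}-\frac1n z^{-n}+\frac{1}{n+1}\overline{z}^{\,n+1}-\frac{a}{n}\overline{z}^{\,-n}-1$ on $\mathbb{C}\setminus\{0\}$. Let $\Gamma$ be the unit circle and suppose $f_a$ has no zeros on $\Gamma$. Let $W_{f_a,\Gamma}=\frac{1}{2\pi}\Delta_\Gamma\arg f_a(z)$ be the winding number of $f_a(\Gamma)$ about the origin ($\Gamma$ traversed counterclockwise). Then the total number $T_a$ of zeros of $f_a$ in $\mathbb{C}\setminus\{0\}$ is $$T_a=2\big(n-W_{f_a,\Gamma}\big)+1.$$
   Context: $f_a$ is a complex-valued harmonic function with a single pole at $0$; its critical curve is the unit circle, with $f_a$ sense-reversing inside and sense-preserving outside. *)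

theory Defs
  imports "HOL-Complex_Analysis.Complex_Analysis"
begin

definition f_a :: "nat \<Rightarrow> real \<Rightarrow> complex \<Rightarrow> complex" where
  "f_a n a z =
     complex_of_real a / of_nat (n + 1) * z ^ (n + 1)
   - 1 / of_nat n * inverse (z ^ n)
   + 1 / of_nat (n + 1) * cnj z ^ (n + 1)
   - complex_of_real a / of_nat n * inverse (cnj z ^ n)
   - 1"

end

theory Submission
  imports Defs
begin

text \<open>
  For \<open>a > 1\<close> we have \<open>f\<^sub>a = a \<phi> + cnj \<phi> - 1\<close> with \<open>\<phi> z = z^(n+1)/(n+1) - 1/(n cnj(z)^n)\<close>, so
  the zeros of \<open>f\<^sub>a\<close> are the solutions of \<open>\<phi> z = c\<close> with \<open>c = 1/(a+1)\<close>, and \<open>Im f\<^sub>a = (a-1) Im \<phi>\<close>.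

  On the upper unit semicircle \<open>Im \<phi>(e^(it))\<close> has zeros \<open>0 = \<tau>\<^sub>0 < \<dots> < \<tau>\<^sub>n = \<pi>\<close> and alternates
  in sign between them, so \<open>f\<^sub>a(e^(it))\<close> runs alternately through the lower and the upper half
  plane. Each such arc adds \<open>\<plusminus>(e\<^sub>j\<^sub>+\<^sub>1 - e\<^sub>j)/2\<close> to the winding number, where
  \<open>e\<^sub>j = [Re \<phi>(e^(i\<tau>\<^sub>j)) < c]\<close>, and the symmetry \<open>f\<^sub>a(cnj z) = cnj (f\<^sub>a z)\<close> doubles the
  contribution of the upper semicircle. As \<open>e\<^sub>j = 1\<close> for even \<open>j\<close>, this gives
  \<open>W = n - 2 \<Sum>\<^bsub>j odd\<^esub> e\<^sub>j - [n odd] e\<^sub>n\<close>.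

  On the positive axis \<open>\<phi>\<close> is increasing and has exactly one \<open>c\<close>-point; on the negative axis
  there are \<open>2 e\<^sub>n\<close> of them for odd \<open>n\<close> and none for even \<open>n\<close>. In the upper half plane
  \<open>\<phi>(e^(r+it)) = c\<close> forces \<open>sin (nt) < 0\<close> and \<open>sin ((n+1)t) < 0\<close>, i.e. \<open>t\<close> lies in an interval
  \<open>(j\<pi>/n, (j+1)\<pi>/(n+1))\<close> with odd \<open>j\<close>; it determines \<open>r\<close> and leaves a level-set equation for a
  function of \<open>t\<close> that tends to \<open>\<infinity>\<close> at both ends of the interval and decreases, then increases,
  with its minimum at \<open>\<tau>\<^sub>j\<close>. This gives \<open>2 e\<^sub>j\<close> solutions, mirrored in the lower half plane,
  so the total is \<open>1 + 2 [n odd] e\<^sub>n + 4 \<Sum>\<^bsub>j odd\<^esub> e\<^sub>j = 2(n - W) + 1\<close>.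
\<close>

section \<open>Winding numbers of paths that cross the real axis\<close>

lemma winding_number_eq_continuous_log:
  assumes p: "path p" and L: "continuous_on (path_image p) L"
    and exp_L: "\<And>w. w \<in> path_image p \<Longrightarrow> exp (L w) = w"
  shows "winding_number p 0 = (L (pathfinish p) - L (pathstart p)) / (2 * of_real pi * \<i>)"
proof -
  have "path (L \<circ> p)"
    using p L continuous_on_compose[of "{0..1}" p L] by (simp add: path_def path_image_def)
  have "winding_number p 0 = winding_number (exp \<circ> (L \<circ> p)) 0"
    by (rule winding_number_cong) (simp add: exp_L path_image_def)
  also have "\<dots> = (L (pathfinish p) - L (pathstart p)) / (2 * of_real pi * \<i>)"
    using winding_number_compose_exp[OF \<open>path (L \<circ> p)\<close>] by (simp add: pathstart_def pathfinish_def)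
  finally show ?thesis .
qed

lemma Re_winding_number_upper_half_plane:
  assumes p: "path p" and im: "path_image p \<subseteq> {w. Im w \<ge> 0} - {0}"
    and "Im (pathstart p) = 0" "Im (pathfinish p) = 0"
  shows "Re (winding_number p 0) =
    (of_bool (Re (pathfinish p) < 0) - of_bool (Re (pathstart p) < 0)) / 2"
proof -
  \<comment> \<open>a continuous logarithm on the closed upper half plane, real on the positive axis\<close>
  define L where "L w = Ln (-\<i> * w) + \<i> * pi / 2" for w
  have slit: "-\<i> * w \<notin> \<real>\<^sub>\<le>\<^sub>0" if "w \<in> path_image p" for w
    using im that by (auto simp: complex_nonpos_Reals_iff complex_eq_iff)
  have "continuous_on (path_image p) L"
    unfolding L_def using slit by (intro continuous_intros) auto
  moreover have "exp (L w) = w" if "w \<in> path_image p" for w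
  proof -
    have "-\<i> * w \<noteq> 0" using slit[OF that] by auto
    moreover have "exp (\<i> * of_real pi / 2) = \<i>"
      using cis_pi_half by (simp add: cis_conv_exp)
    ultimately show ?thesis by (simp add: L_def exp_add mult.commute mult.left_commute)
  qed
  ultimately have W: "winding_number p 0 = (L (pathfinish p) - L (pathstart p)) / (2 * of_real pi * \<i>)"
    by (rule winding_number_eq_continuous_log[OF p])
  have Im_L: "Im (L x) = pi * of_bool (Re x < 0)" if "x \<in> path_image p" "Im x = 0" for x
  proof -
    have x: "x = of_real (Re x)" using that(2) by (simp add: complex_eq_iff)
    have "Re x \<noteq> 0" using that im by (auto simp: complex_eq_iff)
    then show ?thesis
      using Im_Ln_eq_pi_half[of "-\<i> * of_real (Re x)"] by (subst x) (auto simp: L_def)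
  qed
  show ?thesis
    unfolding W using Im_L[OF pathstart_in_path_image] Im_L[OF pathfinish_in_path_image] assms(3,4)
    by (simp add: Re_divide field_simps power2_eq_square)
qed

lemma Re_winding_number_lower_half_plane:
  assumes p: "path p" and im: "path_image p \<subseteq> {w. Im w \<le> 0} - {0}"
    and "Im (pathstart p) = 0" "Im (pathfinish p) = 0"
  shows "Re (winding_number p 0) =
    - (of_bool (Re (pathfinish p) < 0) - of_bool (Re (pathstart p) < 0)) / 2"
proof -
  have "path (cnj \<circ> p)"
    using p by (simp add: path_def continuous_on_cnj continuous_on_compose)
  moreover have "path_image (cnj \<circ> p) \<subseteq> {w. Im w \<ge> 0} - {0}"
    using im by (auto simp: path_image_def)
  ultimately have "Re (winding_number (cnj \<circ> p) 0) =
      (of_bool (Re (pathfinish p) < 0) - of_bool (Re (pathstart p) < 0)) / 2"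
    using Re_winding_number_upper_half_plane assms(3,4) by (simp add: pathstart_def pathfinish_def)
  moreover have "winding_number (cnj \<circ> p) 0 = - cnj (winding_number p 0)"
    using winding_number_cnj[OF p, of 0] im by auto
  ultimately show ?thesis by simp
qed

lemma Re_winding_number_subpath_half_plane:
  assumes \<gamma>: "path \<gamma>" "0 \<notin> path_image \<gamma>" and ab: "0 \<le> a" "a < b" "b \<le> 1"
    and real: "Im (\<gamma> a) = 0" "Im (\<gamma> b) = 0"
    and sign: "\<And>t. a < t \<Longrightarrow> t < b \<Longrightarrow> (-1) ^ k * Im (\<gamma> t) > 0"
  shows "Re (winding_number (subpath a b \<gamma>) 0) =
    (-1) ^ k * (of_bool (Re (\<gamma> b) < 0) - of_bool (Re (\<gamma> a) < 0)) / 2"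
proof -
  have "path_image (subpath a b \<gamma>) \<subseteq> {w. (-1) ^ k * Im w \<ge> 0} - {0}"
  proof
    fix w assume "w \<in> path_image (subpath a b \<gamma>)"
    then obtain t where t: "t \<in> {a..b}" "w = \<gamma> t"
      using ab by (auto simp: path_image_subpath)
    then have "w \<noteq> 0"
      using \<gamma>(2) ab by (auto simp: path_image_def)
    moreover have "(-1) ^ k * Im w \<ge> 0"
      using sign[of t] real t by (cases "t = a \<or> t = b") auto
    ultimately show "w \<in> {w. (-1) ^ k * Im w \<ge> 0} - {0}"
      by simp
  qed
  moreover have "path (subpath a b \<gamma>)"
    using \<gamma> ab by simp
  ultimately show ?thesis
    using real Re_winding_number_upper_half_plane[of "subpath a b \<gamma>"]
      Re_winding_number_lower_half_plane[of "subpath a b \<gamma>"]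
    by (cases "even k") auto
qed

lemma Re_winding_number_alternating_crossings:
  fixes \<gamma> :: "real \<Rightarrow> complex" and s :: "nat \<Rightarrow> real"
  assumes \<gamma>: "path \<gamma>" "0 \<notin> path_image \<gamma>" and "s 0 = 0" "s N \<le> 1"
    and s_less: "\<And>j. j < N \<Longrightarrow> s j < s (Suc j)"
    and real_at_s: "\<And>j. j \<le> N \<Longrightarrow> Im (\<gamma> (s j)) = 0"
    and sign: "\<And>j t. j < N \<Longrightarrow> s j < t \<Longrightarrow> t < s (Suc j) \<Longrightarrow> (-1) ^ (j+1) * Im (\<gamma> t) > 0"
  shows "Re (winding_number (subpath 0 (s N) \<gamma>) 0) =
    (\<Sum>j<N. (-1) ^ (j+1) * (of_bool (Re (\<gamma> (s (Suc j))) < 0) - of_bool (Re (\<gamma> (s j)) < 0))) / 2"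
proof -
  have s_mono: "s j \<le> s k" if "j \<le> k" "k \<le> N" for j k
    using that
  proof (induction k rule: dec_induct)
    case (step m)
    then show ?case using s_less[of m] by (auto simp: Suc_le_eq)
  qed simp
  have s_01: "s j \<in> {0..1}" if "j \<le> N" for j
  proof -
    have "s 0 \<le> s j" "s j \<le> s N" using s_mono that by auto
    then show ?thesis using assms(3,4) by simp
  qed
  have arc: "Re (winding_number (subpath (s j) (s (Suc j)) \<gamma>) 0) =
      (-1) ^ (j+1) * (of_bool (Re (\<gamma> (s (Suc j))) < 0) - of_bool (Re (\<gamma> (s j)) < 0)) / 2"
    if j: "j < N" for j
    by (rule Re_winding_number_subpath_half_plane[OF \<gamma>])
      (use s_01[of j] s_01[of "Suc j"] s_less[OF j] real_at_s[of j] real_at_s[of "Suc j"] sign[OF j] j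
        in \<open>auto simp del: power_Suc\<close>)
  have "Re (winding_number (subpath 0 (s m) \<gamma>) 0) =
    (\<Sum>j<m. (-1) ^ (j+1) * (of_bool (Re (\<gamma> (s (Suc j))) < 0) - of_bool (Re (\<gamma> (s j)) < 0))) / 2"
    if "m \<le> N" for m
    using that
  proof (induction m)
    case 0
    have "\<gamma> 0 \<noteq> 0" using \<gamma>(2) pathstart_in_path_image[of \<gamma>] by (auto simp: pathstart_def)
    then show ?case using assms(3) by simp
  next
    case (Suc m)
    have "winding_number (subpath 0 (s (Suc m)) \<gamma>) 0 =
        winding_number (subpath 0 (s m) \<gamma>) 0 + winding_number (subpath (s m) (s (Suc m)) \<gamma>) 0"
      using winding_number_subpath_combine[OF \<gamma>] s_01 Suc.prems assms(3) by simp
    then show ?case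
      using Suc arc[of m] by (simp add: add_divide_distrib del: power_Suc)
  qed
  then show ?thesis by simp
qed

lemma winding_number_cnj_symmetric_loop:
  assumes \<gamma>: "path \<gamma>" "0 \<notin> path_image \<gamma>" and sym: "\<And>t. \<gamma> (1 - t) = cnj (\<gamma> t)"
  shows "winding_number \<gamma> 0 = of_real (2 * Re (winding_number (subpath 0 (1/2) \<gamma>) 0))"
proof -
  let ?q = "subpath 0 (1/2) \<gamma>"
  have q: "path ?q" "0 \<notin> path_image ?q"
    using \<gamma> path_image_subpath_subset[of 0 "1/2" \<gamma>] by auto
  have "subpath (1/2) 1 \<gamma> = cnj \<circ> reversepath ?q"
  proof
    fix t :: real
    have "subpath (1/2) 1 \<gamma> t = \<gamma> (1 - (1 - t) / 2)"
      by (simp add: subpath_def field_simps)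
    also have "\<dots> = cnj (\<gamma> ((1 - t) / 2))" by (rule sym)
    finally show "subpath (1/2) 1 \<gamma> t = (cnj \<circ> reversepath ?q) t"
      by (simp add: subpath_def reversepath_def)
  qed
  then have "winding_number (subpath (1/2) 1 \<gamma>) 0 = cnj (winding_number ?q 0)"
    using winding_number_cnj[of "reversepath ?q" 0] winding_number_reversepath[OF q] q by simp
  moreover have "winding_number \<gamma> 0 = winding_number ?q 0 + winding_number (subpath (1/2) 1 \<gamma>) 0"
    using winding_number_subpath_combine[OF \<gamma>, of 0 "1/2" 1] by simp
  ultimately show ?thesis by (simp add: complex_add_cnj)
qed

section \<open>Level sets of functions that decrease and then increase\<close>

lemma card_level_set_valley:
  fixes F :: "real \<Rightarrow> real"
  assumes S: "is_interval S" and m: "m \<in> S" and cont: "continuous_on S F"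
    and dec: "\<And>x y. x \<in> S \<Longrightarrow> x < y \<Longrightarrow> y \<le> m \<Longrightarrow> F y < F x"
    and inc: "\<And>x y. m \<le> x \<Longrightarrow> x < y \<Longrightarrow> y \<in> S \<Longrightarrow> F x < F y"
    and unbounded_left: "\<And>C. \<exists>x\<in>S. x < m \<and> F x > C"
    and unbounded_right: "\<And>C. \<exists>x\<in>S. x > m \<and> F x > C"
    and "F m \<noteq> c"
  shows "finite {x\<in>S. F x = c}" "card {x\<in>S. F x = c} = 2 * of_bool (F m < c)"
proof -
  have between: "x \<in> S" if "a \<in> S" "b \<in> S" "a \<le> x" "x \<le> b" for a b x
    using S that unfolding is_interval_1 by blast
  have unique_left: "x = y" if "x \<in> S" "y \<in> S" "x \<le> m" "y \<le> m" "F x = F y" for x y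
    using dec[of x y] dec[of y x] that by (cases x y rule: linorder_cases) auto
  have unique_right: "x = y" if "x \<in> S" "y \<in> S" "m \<le> x" "m \<le> y" "F x = F y" for x y
    using inc[of x y] inc[of y x] that by (cases x y rule: linorder_cases) auto
  consider "\<not> F m < c" "{x\<in>S. F x = c} = {}"
    | x\<^sub>1 x\<^sub>2 where "F m < c" "x\<^sub>1 < x\<^sub>2" "{x\<in>S. F x = c} = {x\<^sub>1, x\<^sub>2}"
  proof (cases "F m < c")
    case False
    then have "F x \<noteq> c" if "x \<in> S" for x
      using dec[OF that, of m] inc[OF _ _ that, of m] m \<open>F m \<noteq> c\<close>
      by (cases x m rule: linorder_cases) auto
    then show ?thesis using False that(1) by auto
  next
    case True
    obtain a where a: "a \<in> S" "a < m" "F a > c" using unbounded_left by blast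
    obtain b where b: "b \<in> S" "b > m" "F b > c" using unbounded_right by blast
    have "\<exists>x\<ge>a. x \<le> m \<and> F x = c"
      using a True between[OF a(1) m] by (intro IVT2' continuous_on_subset[OF cont]) auto
    then obtain x\<^sub>1 where x\<^sub>1: "a \<le> x\<^sub>1" "x\<^sub>1 \<le> m" "F x\<^sub>1 = c" by blast
    have "\<exists>x\<ge>m. x \<le> b \<and> F x = c"
      using b True between[OF m b(1)] by (intro IVT' continuous_on_subset[OF cont]) auto
    then obtain x\<^sub>2 where x\<^sub>2: "m \<le> x\<^sub>2" "x\<^sub>2 \<le> b" "F x\<^sub>2 = c" by blast
    have S12: "x\<^sub>1 \<in> S" "x\<^sub>2 \<in> S"
      using between[OF a(1) m] between[OF m b(1)] x\<^sub>1 x\<^sub>2 by auto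
    have "x\<^sub>1 < m" "m < x\<^sub>2"
      using x\<^sub>1 x\<^sub>2 True by (auto simp: order.order_iff_strict)
    moreover have "{x\<in>S. F x = c} = {x\<^sub>1, x\<^sub>2}"
    proof (intro equalityI subsetI)
      fix x assume "x \<in> {x\<in>S. F x = c}"
      then show "x \<in> {x\<^sub>1, x\<^sub>2}"
        using unique_left[of x x\<^sub>1] unique_right[of x x\<^sub>2] S12 x\<^sub>1 x\<^sub>2 by (cases "x \<le> m") auto
    qed (use S12 x\<^sub>1 x\<^sub>2 in auto)
    ultimately show ?thesis
      by (intro that(2)[OF True]) auto
  qed
  then have "finite {x\<in>S. F x = c} \<and> card {x\<in>S. F x = c} = 2 * of_bool (F m < c)"
    by cases (auto simp del: Collect_empty_eq)
  then show "finite {x\<in>S. F x = c}" "card {x\<in>S. F x = c} = 2 * of_bool (F m < c)"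
    by auto
qed

lemma filterlim_minus_ln_at_top:
  fixes g u :: "'a \<Rightarrow> real"
  assumes "(g \<longlongrightarrow> l) F" "(u \<longlongrightarrow> 0) F" "eventually (\<lambda>x. u x > 0) F" "k > 0"
  shows "filterlim (\<lambda>x. g x - k * ln (u x)) at_top F"
proof -
  have "filterlim u (at_right 0) F"
    using assms(2,3) by (rule tendsto_imp_filterlim_at_right)
  then have "filterlim (\<lambda>x. ln (u x)) at_bot F"
    by (rule filterlim_compose[OF ln_at_0])
  then have "filterlim (\<lambda>x. - ln (u x)) at_top F"
    by (simp add: filterlim_uminus_at_bot)
  then have "filterlim (\<lambda>x. k * - ln (u x)) at_top F"
    using assms(4) by (intro filterlim_tendsto_pos_mult_at_top[OF tendsto_const])
  from filterlim_tendsto_add_at_top[OF assms(1) this] show ?thesis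
    by simp
qed

lemma filterlim_at_top_at_right_ex:
  fixes F :: "real \<Rightarrow> real"
  assumes "filterlim F at_top (at_right l)" "l < m"
  shows "\<exists>x. l < x \<and> x < m \<and> F x > C"
proof -
  have "\<forall>\<^sub>F x in at_right l. C < F x"
    using assms(1) by (simp add: filterlim_at_top_dense)
  moreover have "\<forall>\<^sub>F x in at_right l. l < x \<and> x < m"
    using assms(2) by (auto simp: eventually_at_right_field)
  ultimately have "\<forall>\<^sub>F x in at_right l. l < x \<and> x < m \<and> C < F x"
    by eventually_elim auto
  then show ?thesis
    by (rule eventually_happens'[rotated]) simp
qed

lemma filterlim_at_top_at_left_ex:
  fixes F :: "real \<Rightarrow> real"
  assumes "filterlim F at_top (at_left r)" "m < r"
  shows "\<exists>x. m < x \<and> x < r \<and> F x > C"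
proof -
  have "\<forall>\<^sub>F x in at_left r. C < F x"
    using assms(1) by (simp add: filterlim_at_top_dense)
  moreover have "\<forall>\<^sub>F x in at_left r. m < x \<and> x < r"
    using assms(2) by (auto simp: eventually_at_left_field)
  ultimately have "\<forall>\<^sub>F x in at_left r. m < x \<and> x < r \<and> C < F x"
    by eventually_elim auto
  then show ?thesis
    by (rule eventually_happens'[rotated]) simp
qed

section \<open>The function \<open>\<phi>\<close> and its values on the unit circle\<close>

definition phi :: "nat \<Rightarrow> complex \<Rightarrow> complex" where
  "phi n z = z ^ (n+1) / of_nat (n+1) - inverse (cnj z ^ n) / of_nat n"

lemma f_a_eq_phi: "f_a n a z = of_real a * phi n z + cnj (phi n z) - 1"
  unfolding f_a_def phi_def by (simp add: field_simps)

lemma Re_f_a: "Re (f_a n a z) = (a + 1) * Re (phi n z) - 1"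
  unfolding f_a_eq_phi by (simp add: algebra_simps)

lemma Im_f_a: "Im (f_a n a z) = (a - 1) * Im (phi n z)"
  unfolding f_a_eq_phi by (simp add: algebra_simps)

lemma f_a_eq_0_iff:
  assumes "a > 1"
  shows "f_a n a z = 0 \<longleftrightarrow> phi n z = of_real (1 / (a + 1))"
  using assms by (auto simp: complex_eq_iff Re_f_a Im_f_a field_simps)

lemma Re_f_a_less_0_iff:
  assumes "a > 1"
  shows "Re (f_a n a z) < 0 \<longleftrightarrow> Re (phi n z) < 1 / (a + 1)"
  using assms unfolding Re_f_a by (simp add: field_simps)

lemma f_a_cnj: "f_a n a (cnj z) = cnj (f_a n a z)"
  unfolding f_a_def by simp

lemma phi_cnj: "phi n (cnj z) = cnj (phi n z)"
  unfolding phi_def by simp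

lemma phi_exp_Complex:
  assumes "n \<ge> 1"
  shows "phi n (exp (Complex r t)) =
    Complex (exp ((real n + 1) * r) * cos ((real n + 1) * t) / (real n + 1)
               - exp (- (real n * r)) * cos (real n * t) / real n)
            (exp ((real n + 1) * r) * sin ((real n + 1) * t) / (real n + 1)
               - exp (- (real n * r)) * sin (real n * t) / real n)"
proof -
  have "of_nat (n+1) * Complex r t = Complex ((real n + 1) * r) ((real n + 1) * t)"
    by (simp add: complex_eq_iff)
  then have e1: "exp (Complex r t) ^ (n+1) = exp (Complex ((real n + 1) * r) ((real n + 1) * t))"
    by (metis exp_of_nat_mult)
  have "- (of_nat n * cnj (Complex r t)) = Complex (- (real n * r)) (real n * t)"
    by (simp add: complex_eq_iff)
  then have e2: "inverse (cnj (exp (Complex r t)) ^ n) = exp (Complex (- (real n * r)) (real n * t))"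
    by (metis exp_cnj exp_of_nat_mult exp_minus)
  show ?thesis
    unfolding phi_def e1 e2 using assms
    by (simp add: exp_Complex complex_eq_iff Re_divide_of_nat Im_divide_of_nat)
qed

lemma cis_eq_exp_Complex: "cis t = exp (Complex 0 t)"
  by (simp add: exp_Complex complex_eq_iff)

definition phi_cis_Im :: "nat \<Rightarrow> real \<Rightarrow> real" where
  "phi_cis_Im n t = sin ((real n + 1) * t) / (real n + 1) - sin (real n * t) / real n"

lemma Re_phi_cis:
  "n \<ge> 1 \<Longrightarrow> Re (phi n (cis t)) = cos ((real n + 1) * t) / (real n + 1) - cos (real n * t) / real n"
  by (simp add: cis_eq_exp_Complex phi_exp_Complex)

lemma Im_phi_cis: "n \<ge> 1 \<Longrightarrow> Im (phi n (cis t)) = phi_cis_Im n t"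
  by (simp add: cis_eq_exp_Complex phi_exp_Complex phi_cis_Im_def)

lemma sin_alternating_sign:
  assumes "real j * pi < x" "x < (real j + 1) * pi"
  shows "(-1) ^ j * sin x > 0"
proof -
  have "sin x = sin (x - real j * pi) * (-1) ^ j"
    using sin_add[of "x - real j * pi" "real j * pi"] by (simp add: sin_npi cos_npi)
  moreover have "sin (x - real j * pi) > 0"
    using assms by (intro sin_gt_zero) (auto simp: algebra_simps)
  ultimately show ?thesis
    by (simp add: mult.commute power_mult_distrib[symmetric])
qed

lemma phi_cis_Im_deriv:
  "n \<ge> 1 \<Longrightarrow> (phi_cis_Im n has_real_derivative (cos ((real n + 1) * t) - cos (real n * t))) (at t)"
  unfolding phi_cis_Im_def[abs_def] by (auto intro!: derivative_eq_intros)

lemma continuous_on_phi_cis_Im: "n \<ge> 1 \<Longrightarrow> continuous_on S (phi_cis_Im n)"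
  unfolding phi_cis_Im_def[abs_def] by (intro continuous_intros) auto

text \<open>The derivative of \<^const>\<open>phi_cis_Im\<close> is \<open>-2 sin ((2n+1)t/2) sin (t/2)\<close>, so its critical
  points in \<open>[0, 2\<pi>)\<close> are the angles \<open>2j\<pi>/(2n+1)\<close>.\<close>
definition crit_angle :: "nat \<Rightarrow> nat \<Rightarrow> real" where
  "crit_angle n j = 2 * real j * pi / (2 * real n + 1)"

lemma phi_cis_Im_deriv_sign:
  assumes n: "n \<ge> 1" and j: "j \<le> n" and t: "crit_angle n j < t" "t < crit_angle n (Suc j)"
  shows "(-1) ^ (j+1) * (cos ((real n + 1) * t) - cos (real n * t)) > 0"
proof -
  have cos_diff: "cos ((real n + 1) * t) - cos (real n * t) = - 2 * sin ((2 * real n + 1) * t / 2) * sin (t / 2)"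
    by (simp add: cos_diff_cos algebra_simps)
  have "(-1) ^ j * sin ((2 * real n + 1) * t / 2) > 0"
    using t by (intro sin_alternating_sign) (simp_all add: crit_angle_def field_simps)
  moreover have "sin (t / 2) > 0"
  proof (rule sin_gt_zero)
    have "t < 2 * (real j + 1) * pi / (2 * real n + 1)"
      using t(2) by (simp add: crit_angle_def algebra_simps)
    also have "\<dots> \<le> 2 * (real n + 1) * pi / (2 * real n + 1)"
      using j by (intro divide_right_mono mult_right_mono) auto
    also have "\<dots> < 2 * pi" using n by (simp add: field_simps)
    finally show "t / 2 < pi" by simp
    show "0 < t / 2"
      using t(1) le_less_trans[of 0 "crit_angle n j" t] by (simp add: crit_angle_def)
  qed
  moreover have "(-1) ^ (j+1) * (- 2 * A * B) = 2 * (((-1) ^ j * A) * B)" for A B :: real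
    by simp
  ultimately show ?thesis
    unfolding cos_diff by (metis mult_pos_pos zero_less_numeral)
qed

lemma phi_cis_Im_strict_mono:
  assumes n: "n \<ge> 1" and j: "j \<le> n"
    and xy: "crit_angle n j \<le> x" "x < y" "y \<le> crit_angle n (Suc j)"
  shows "(-1) ^ (j+1) * phi_cis_Im n x < (-1) ^ (j+1) * phi_cis_Im n y"
proof (rule DERIV_pos_imp_increasing_open[OF xy(2)])
  fix t assume "x < t" "t < y"
  then have "crit_angle n j < t" "t < crit_angle n (Suc j)" using xy by auto
  then show "\<exists>d. ((\<lambda>t. (-1) ^ (j+1) * phi_cis_Im n t) has_real_derivative d) (at t) \<and> 0 < d"
    using phi_cis_Im_deriv_sign[OF n j] phi_cis_Im_deriv[OF n] by (blast intro: DERIV_cmult)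
qed (intro continuous_intros continuous_on_phi_cis_Im n)

definition angle_interval :: "nat \<Rightarrow> nat \<Rightarrow> real set" where
  "angle_interval n j = {real j * pi / real n <..< (real j + 1) * pi / (real n + 1)}"

lemma angle_interval_left_less_right:
  "j < n \<Longrightarrow> real j * pi / real n < (real j + 1) * pi / (real n + 1)"
  by (simp add: field_simps)

lemma angle_interval_right_less_next_left:
  "n \<ge> 1 \<Longrightarrow> (real j + 1) * pi / (real n + 1) < (real j + 1) * pi / real n"
  by (simp add: field_simps add_pos_nonneg)

lemma crit_angle_le_angle_interval_left: "n \<ge> 1 \<Longrightarrow> crit_angle n j \<le> real j * pi / real n"
  by (simp add: crit_angle_def field_simps)

lemma angle_interval_right_le_crit_angle: "(real j + 1) * pi / (real n + 1) \<le> crit_angle n (Suc j)"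
  by (simp add: crit_angle_def field_simps add_pos_nonneg)

lemma phi_cis_Im_angle_interval_left:
  assumes "1 \<le> j" "j < n"
  shows "(-1) ^ j * phi_cis_Im n (real j * pi / real n) > 0"
proof -
  have "(-1) ^ j * sin ((real n + 1) * (real j * pi / real n)) > 0"
    using assms by (intro sin_alternating_sign) (simp_all add: field_simps)
  moreover have "sin (real n * (real j * pi / real n)) = 0"
    using assms by (simp add: sin_npi)
  ultimately show ?thesis
    unfolding phi_cis_Im_def by simp
qed

lemma phi_cis_Im_angle_interval_right:
  assumes "j < n"
  shows "(-1) ^ j * phi_cis_Im n ((real j + 1) * pi / (real n + 1)) < 0"
proof -
  have "(-1) ^ j * sin (real n * ((real j + 1) * pi / (real n + 1))) > 0"
    using assms by (intro sin_alternating_sign) (simp_all add: field_simps add_pos_nonneg)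
  moreover have "sin ((real n + 1) * ((real j + 1) * pi / (real n + 1))) = 0"
    using sin_npi[of "Suc j"] by (simp add: add.commute)
  ultimately show ?thesis
    unfolding phi_cis_Im_def using assms by simp
qed

lemma phi_cis_Im_zero_in_angle_interval:
  assumes "1 \<le> j" "j < n"
  shows "\<exists>t \<in> angle_interval n j. phi_cis_Im n t = 0"
proof -
  let ?l = "real j * pi / real n" and ?r = "(real j + 1) * pi / (real n + 1)"
  have "\<exists>t\<ge>?l. t \<le> ?r \<and> (-1) ^ j * phi_cis_Im n t = 0"
    using phi_cis_Im_angle_interval_left[OF assms] phi_cis_Im_angle_interval_right[OF assms(2)]
      angle_interval_left_less_right[OF assms(2)] assms
    by (intro IVT2') (auto intro!: continuous_intros continuous_on_phi_cis_Im)
  then obtain t where "?l \<le> t" "t \<le> ?r" "phi_cis_Im n t = 0" by auto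
  moreover from this have "t \<noteq> ?l" "t \<noteq> ?r"
    using phi_cis_Im_angle_interval_left[OF assms] phi_cis_Im_angle_interval_right[OF assms(2)] by auto
  ultimately show ?thesis by (auto simp: angle_interval_def)
qed

text \<open>\<open>zero_angle n j\<close> is the zero \<open>\<tau>\<^sub>j\<close> of \<open>Im \<phi>(e^(it))\<close> from the proof idea.\<close>
definition zero_angle :: "nat \<Rightarrow> nat \<Rightarrow> real" where
  "zero_angle n j = (if j = 0 then 0 else if n \<le> j then pi
     else (SOME t. t \<in> angle_interval n j \<and> phi_cis_Im n t = 0))"

lemma zero_angle_0 [simp]: "zero_angle n 0 = 0"
  by (simp add: zero_angle_def)

lemma zero_angle_self [simp]: "n \<ge> 1 \<Longrightarrow> zero_angle n n = pi"
  by (simp add: zero_angle_def)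

lemma zero_angle_in_angle_interval:
  assumes "1 \<le> j" "j < n"
  shows "zero_angle n j \<in> angle_interval n j" "phi_cis_Im n (zero_angle n j) = 0"
  using someI_ex[OF phi_cis_Im_zero_in_angle_interval[OF assms, unfolded Bex_def]] assms
  by (auto simp: zero_angle_def)

lemma phi_cis_Im_zero_angle:
  assumes "j \<le> n"
  shows "phi_cis_Im n (zero_angle n j) = 0"
proof -
  have "sin (real (Suc n) * pi) = 0" by (rule sin_npi)
  then show ?thesis
    using assms zero_angle_in_angle_interval(2)[of j n]
    by (cases "j = 0"; cases "j = n") (auto simp: phi_cis_Im_def add.commute)
qed

lemma zero_angle_between_crit_angles:
  assumes "j \<le> n"
  shows "crit_angle n j \<le> zero_angle n j" "zero_angle n j \<le> crit_angle n (Suc j)"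
proof -
  consider "j = 0" | "j = n" "n \<ge> 1" | "1 \<le> j" "j < n"
    using assms by linarith
  then have "crit_angle n j \<le> zero_angle n j \<and> zero_angle n j \<le> crit_angle n (Suc j)"
  proof cases
    case 1
    then show ?thesis by (simp add: crit_angle_def)
  next
    case 2
    then show ?thesis by (simp add: crit_angle_def field_simps)
  next
    case 3
    then show ?thesis
      using zero_angle_in_angle_interval(1)[OF 3] crit_angle_le_angle_interval_left[of n j]
        angle_interval_right_le_crit_angle[of j n]
      by (auto simp: angle_interval_def)
  qed
  then show "crit_angle n j \<le> zero_angle n j" "zero_angle n j \<le> crit_angle n (Suc j)"
    by auto
qed

lemma zero_angle_less:
  assumes n: "n \<ge> 1" and j: "j < n"
  shows "zero_angle n j < zero_angle n (Suc j)"
proof -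
  have "zero_angle n j < (real j + 1) * pi / (real n + 1)"
    using zero_angle_in_angle_interval(1)[of j n] j by (cases "j = 0") (auto simp: angle_interval_def)
  moreover have "(real j + 1) * pi / real n \<le> zero_angle n (Suc j)"
    using zero_angle_in_angle_interval(1)[of "Suc j" n] j
    by (cases "Suc j = n") (auto simp: angle_interval_def add.commute)
  ultimately show ?thesis
    using angle_interval_right_less_next_left[OF n, of j] by linarith
qed

lemma phi_cis_Im_sign_between_zero_angles:
  assumes n: "n \<ge> 1" and j: "j < n" and t: "zero_angle n j < t" "t < zero_angle n (Suc j)"
  shows "(-1) ^ (j+1) * phi_cis_Im n t > 0"
proof (cases "t \<le> crit_angle n (Suc j)")
  case True
  have "(-1) ^ (j+1) * phi_cis_Im n (zero_angle n j) < (-1) ^ (j+1) * phi_cis_Im n t"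
    using zero_angle_between_crit_angles(1)[of j n] j t(1) True
    by (intro phi_cis_Im_strict_mono[OF n]) auto
  then show ?thesis using phi_cis_Im_zero_angle[of j n] j by simp
next
  case False
  have "(-1) ^ (Suc j+1) * phi_cis_Im n t < (-1) ^ (Suc j+1) * phi_cis_Im n (zero_angle n (Suc j))"
    using zero_angle_between_crit_angles(2)[of "Suc j" n] j t(2) False
    by (intro phi_cis_Im_strict_mono[OF n]) auto
  then show ?thesis using phi_cis_Im_zero_angle[of "Suc j" n] j by simp
qed

section \<open>The winding number of \<open>f\<^sub>a\<close> around the unit circle\<close>

text \<open>\<open>below_level n c j\<close> is the indicator \<open>e\<^sub>j\<close> of the proof idea.\<close>
definition below_level :: "nat \<Rightarrow> real \<Rightarrow> nat \<Rightarrow> real" where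
  "below_level n c j = of_bool (Re (phi n (cis (zero_angle n j))) < c)"

lemma circlepath_0_1: "circlepath 0 1 t = cis (2 * pi * t)"
  by (simp add: circlepath cis_conv_exp mult_ac)

lemma winding_number_f_a_circle:
  assumes n: "n \<ge> 1" and a: "a > 1" and no_zero: "\<forall>z. cmod z = 1 \<longrightarrow> f_a n a z \<noteq> 0"
  shows "winding_number (f_a n a \<circ> circlepath 0 1) 0 =
    of_real (\<Sum>j<n. (-1) ^ (j+1) * (below_level n (1 / (a + 1)) (Suc j) - below_level n (1 / (a + 1)) j))"
proof -
  define \<gamma> where "\<gamma> = f_a n a \<circ> circlepath 0 1"
  have \<gamma>_eq: "\<gamma> t = f_a n a (cis (2 * pi * t))" for t
    by (simp add: \<gamma>_def circlepath_0_1)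
  have "continuous_on (-{0}) (f_a n a)"
    unfolding f_a_def[abs_def] by (intro continuous_intros) auto
  then have "path \<gamma>"
    unfolding \<gamma>_def path_def
    by (rule continuous_on_compose[OF path_circlepath[unfolded path_def] continuous_on_subset])
      (auto simp: circlepath_0_1)
  moreover have "0 \<notin> path_image \<gamma>"
    using no_zero by (auto simp: path_image_def \<gamma>_eq)
  moreover have "\<gamma> (1 - t) = cnj (\<gamma> t)" for t
  proof -
    have "cis (2 * pi * (1 - t)) = cnj (cis (2 * pi * t))"
      by (simp add: complex_eq_iff algebra_simps cos_diff sin_diff)
    then show ?thesis by (simp add: \<gamma>_eq f_a_cnj)
  qed
  ultimately have W: "winding_number \<gamma> 0 = of_real (2 * Re (winding_number (subpath 0 (1/2) \<gamma>) 0))"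
    by (rule winding_number_cnj_symmetric_loop)
  define s where "s j = zero_angle n j / (2 * pi)" for j
  have \<gamma>_s: "\<gamma> (s j) = f_a n a (cis (zero_angle n j))" for j
    by (simp add: \<gamma>_eq s_def)
  have "Re (winding_number (subpath 0 (s n) \<gamma>) 0) =
    (\<Sum>j<n. (-1) ^ (j+1) * (of_bool (Re (\<gamma> (s (Suc j))) < 0) - of_bool (Re (\<gamma> (s j)) < 0))) / 2"
  proof (rule Re_winding_number_alternating_crossings[OF \<open>path \<gamma>\<close> \<open>0 \<notin> path_image \<gamma>\<close>])
    show "s j < s (Suc j)" if "j < n" for j
      using zero_angle_less[OF n that] by (simp add: s_def divide_strict_right_mono)
    show "Im (\<gamma> (s j)) = 0" if "j \<le> n" for j
      using phi_cis_Im_zero_angle[OF that] by (simp add: \<gamma>_s Im_f_a Im_phi_cis[OF n])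
    show "(-1) ^ (j+1) * Im (\<gamma> t) > 0" if "j < n" "s j < t" "t < s (Suc j)" for j t
    proof -
      have "zero_angle n j < 2 * pi * t" "2 * pi * t < zero_angle n (Suc j)"
        using that(2,3) by (simp_all add: s_def field_simps)
      then have "(-1) ^ (j+1) * phi_cis_Im n (2 * pi * t) > 0"
        by (rule phi_cis_Im_sign_between_zero_angles[OF n that(1)])
      then show ?thesis
        using a by (simp add: \<gamma>_eq Im_f_a Im_phi_cis[OF n] mult.left_commute mult_pos_neg)
    qed
  qed (use n in \<open>simp_all add: s_def\<close>)
  then have "2 * Re (winding_number (subpath 0 (1/2) \<gamma>) 0) =
    (\<Sum>j<n. (-1) ^ (j+1) * (below_level n (1 / (a + 1)) (Suc j) - below_level n (1 / (a + 1)) j))"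
    using n by (simp add: \<gamma>_s s_def[of n] below_level_def Re_f_a_less_0_iff[OF a])
  with W have "winding_number \<gamma> 0 =
    of_real (\<Sum>j<n. (-1) ^ (j+1) * (below_level n (1 / (a + 1)) (Suc j) - below_level n (1 / (a + 1)) j))"
    by (simp only:)
  then show ?thesis
    by (simp only: \<gamma>_def)
qed

lemma sin_signs_angle_interval:
  assumes j: "j < n" and t: "t \<in> angle_interval n j"
  shows "(-1) ^ j * sin (real n * t) > 0" "(-1) ^ j * sin ((real n + 1) * t) > 0" "0 < t" "t < pi"
proof -
  have t: "real j * pi / real n < t" "t < (real j + 1) * pi / (real n + 1)"
    using t by (auto simp: angle_interval_def)
  have "(real j + 1) * pi / (real n + 1) \<le> pi"
    using j by (simp add: field_simps)
  then show "t < pi" using t(2) by linarith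
  show "0 < t"
    using t(1) le_less_trans[of 0 "real j * pi / real n" t] by simp
  show "(-1) ^ j * sin (real n * t) > 0"
  proof (rule sin_alternating_sign)
    show "real j * pi < real n * t" using t(1) j by (simp add: field_simps)
    have "real n * t < real n * ((real j + 1) * pi / (real n + 1))"
      using t(2) j by (intro mult_strict_left_mono) auto
    also have "\<dots> \<le> (real j + 1) * pi"
      by (simp add: field_simps)
    finally show "real n * t < (real j + 1) * pi" .
  qed
  show "(-1) ^ j * sin ((real n + 1) * t) > 0"
  proof (rule sin_alternating_sign)
    have "real j * pi \<le> (real n + 1) * (real j * pi / real n)"
      using j by (simp add: field_simps)
    also have "\<dots> < (real n + 1) * t"
      using t(1) by (intro mult_strict_left_mono) auto
    finally show "real j * pi < (real n + 1) * t" .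
    show "(real n + 1) * t < (real j + 1) * pi"
      using t(2) by (simp add: field_simps)
  qed
qed

lemma Re_phi_cis_mult_sin:
  assumes n: "n \<ge> 1" and "phi_cis_Im n t = 0"
  shows "Re (phi n (cis t)) * sin ((real n + 1) * t) = - sin t / real n"
proof -
  define N sA sB cA cB where "N = real n" "sA = sin (N * t)" "sB = sin ((N + 1) * t)"
    "cA = cos (N * t)" "cB = cos ((N + 1) * t)"
  have N: "N \<ge> 1" using n by (simp add: N_sA_sB_cA_cB_def)
  have "sin t = sin ((N + 1) * t - N * t)"
    by (simp add: algebra_simps)
  then have sin_t: "sin t = sB * cA - cB * sA"
    unfolding N_sA_sB_cA_cB_def sin_diff by simp
  have q: "sB / (N + 1) = sA / N"
    using assms(2) unfolding phi_cis_Im_def N_sA_sB_cA_cB_def by simp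
  have "Re (phi n (cis t)) * sB = cB * (sB / (N + 1)) - cA * sB / N"
    unfolding Re_phi_cis[OF n] N_sA_sB_cA_cB_def by (simp add: field_simps)
  also have "\<dots> = cB * (sA / N) - cA * sB / N"
    by (simp only: q)
  also have "\<dots> = - (sB * cA - cB * sA) / N"
    using N by (simp add: field_simps)
  finally show ?thesis
    unfolding sin_t[symmetric] by (simp add: N_sA_sB_cA_cB_def)
qed

lemma below_level_even:
  assumes n: "n \<ge> 1" and c: "c > 0" and j: "j \<le> n" "even j"
  shows "below_level n c j = 1"
proof -
  have "Re (phi n (cis (zero_angle n j))) < 0"
  proof -
    consider "j = 0" | "1 \<le> j" "j < n" | "j = n"
      using j by linarith
    then show ?thesis
    proof cases
      case 1
      then show ?thesis
        using n Re_phi_cis[OF n, of 0] by (simp add: frac_less2)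
    next
      case 2
      let ?t = "zero_angle n j"
      have t: "?t \<in> angle_interval n j" "phi_cis_Im n ?t = 0"
        using zero_angle_in_angle_interval[OF 2] by auto
      have "sin ((real n + 1) * ?t) > 0" "sin ?t > 0"
        using sin_signs_angle_interval[OF 2(2) t(1)] j(2) by (auto intro: sin_gt_zero)
      moreover have "Re (phi n (cis ?t)) * sin ((real n + 1) * ?t) = - sin ?t / real n"
        by (rule Re_phi_cis_mult_sin[OF n t(2)])
      moreover have "- sin ?t / real n < 0"
        using \<open>sin ?t > 0\<close> n by simp
      ultimately have "Re (phi n (cis ?t)) * sin ((real n + 1) * ?t) < 0"
        by linarith
      with \<open>sin ((real n + 1) * ?t) > 0\<close> show ?thesis
        by (simp add: mult_less_0_iff)
    next
      case 3
      have "cos (real n * pi) = 1" "cos ((real n + 1) * pi) = -1"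
        using j 3 cos_npi[of n] cos_npi[of "Suc n"] by (simp_all add: add.commute)
      then show ?thesis
        using 3 n Re_phi_cis[OF n, of pi] by (simp, simp add: field_simps)
    qed
  qed
  then show ?thesis
    using c by (simp add: below_level_def)
qed

section \<open>Zeros on the real axis\<close>

definition phi_real :: "nat \<Rightarrow> real \<Rightarrow> real" where
  "phi_real n x = x ^ (n+1) / (real n + 1) - inverse (x ^ n) / real n"

definition phi_neg_real :: "nat \<Rightarrow> real \<Rightarrow> real" where
  "phi_neg_real n x = x ^ (n+1) / (real n + 1) + inverse (x ^ n) / real n"

lemma phi_of_real: "phi n (of_real x) = of_real (phi_real n x)"
  unfolding phi_def phi_real_def by simp

lemma phi_of_real_neg: "phi n (of_real (- x)) = of_real ((-1) ^ (n+1) * phi_neg_real n x)"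
  unfolding phi_of_real phi_real_def phi_neg_real_def
  by (cases "even n") (simp_all add: power_minus_odd power_minus_even algebra_simps)

lemma phi_real_strict_mono:
  assumes "n \<ge> 1" "0 < x" "x < y"
  shows "phi_real n x < phi_real n y"
proof -
  have "x ^ (n+1) < y ^ (n+1)" "inverse (y ^ n) < inverse (x ^ n)"
    using assms by (auto intro!: power_strict_mono less_imp_inverse_less simp del: power_Suc)
  then show ?thesis
    unfolding phi_real_def using assms(1) by (intro diff_strict_mono divide_strict_right_mono) auto
qed

lemma phi_neg_real_deriv:
  assumes n: "n \<ge> 1" and x: "x > 0"
  shows "(phi_neg_real n has_real_derivative (x ^ n - inverse (x ^ (n+1)))) (at x)"
proof -
  obtain k where k: "n = Suc k" using n by (cases n) auto
  have "((\<lambda>x. x ^ (n+1) / (real n + 1)) has_real_derivative x ^ n) (at x)"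
    by (auto intro!: derivative_eq_intros simp del: power_Suc simp add: add.commute)
  moreover have "((\<lambda>x. inverse (x ^ n) / real n) has_real_derivative - inverse (x ^ (n+1))) (at x)"
    unfolding k using x by (auto intro!: derivative_eq_intros simp del: power_Suc) (simp add: field_simps)
  ultimately show ?thesis
    unfolding phi_neg_real_def[abs_def] by (rule DERIV_add[THEN DERIV_cong]) simp
qed

lemma card_phi_eq_pos_real:
  assumes n: "n \<ge> 1" and c: "0 < c" "c < 1/2"
  shows "card {z. Im z = 0 \<and> Re z > 0 \<and> phi n z = of_real c} = 1"
proof -
  have "1 / (real n + 1) \<le> 1 / real n"
    using n by (simp add: frac_le)
  then have "phi_real n 1 < c"
    using c by (simp add: phi_real_def)
  moreover have "c < phi_real n 2"
  proof -
    have "real (n + 1) < 2 ^ (n+1)"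
      using of_nat_less_iff[THEN iffD2, OF less_exp[of "n+1"]] by simp
    then have "1 < 2 ^ (n+1) / (real n + 1)" by simp
    moreover have "inverse (2 ^ n) / real n \<le> 1/2"
    proof -
      have "(2::real) \<le> 2 ^ n"
        using n by (metis power_one_right power_increasing one_le_numeral)
      then have "1 * 2 \<le> real n * 2 ^ n"
        using n by (intro mult_mono) auto
      then show ?thesis
        using n by (simp add: field_simps)
    qed
    ultimately show ?thesis
      unfolding phi_real_def using c by linarith
  qed
  moreover have "continuous_on {1..2} (phi_real n)"
    unfolding phi_real_def[abs_def] using n by (intro continuous_intros) auto
  ultimately obtain x\<^sub>0 where x\<^sub>0: "1 \<le> x\<^sub>0" "phi_real n x\<^sub>0 = c"
    using IVT'[of "phi_real n" 1 c 2] by auto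
  have unique: "x = x\<^sub>0" if "x > 0" "phi_real n x = c" for x
    using phi_real_strict_mono[OF n, of x x\<^sub>0] phi_real_strict_mono[OF n, of x\<^sub>0 x] that x\<^sub>0
    by (cases x x\<^sub>0 rule: linorder_cases) auto
  have "{z. Im z = 0 \<and> Re z > 0 \<and> phi n z = of_real c} = {of_real x\<^sub>0}"
  proof (intro equalityI subsetI)
    fix z assume z: "z \<in> {z. Im z = 0 \<and> Re z > 0 \<and> phi n z = of_real c}"
    then have zx: "z = of_real (Re z)" by (simp add: complex_eq_iff)
    from z have "phi n (of_real (Re z)) = of_real c"
      by (subst zx[symmetric]) simp
    then have "phi_real n (Re z) = c"
      by (simp only: phi_of_real of_real_eq_iff)
    then show "z \<in> {of_real x\<^sub>0}"
      using unique z zx by auto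
  qed (use x\<^sub>0 in \<open>simp add: phi_of_real\<close>)
  then show ?thesis by simp
qed

lemma phi_neg_real_pos: "n \<ge> 1 \<Longrightarrow> x > 0 \<Longrightarrow> phi_neg_real n x > 0"
  unfolding phi_neg_real_def by (intro add_pos_pos divide_pos_pos) auto

lemma continuous_on_phi_neg_real:
  assumes "n \<ge> 1" "S \<subseteq> {0<..}"
  shows "continuous_on S (phi_neg_real n)"
  using assms phi_neg_real_deriv[OF assms(1)]
  by (intro continuous_at_imp_continuous_on) (auto intro: DERIV_isCont)

lemma phi_neg_real_decreasing:
  assumes n: "n \<ge> 1" and xy: "0 < x" "x < y" "y \<le> 1"
  shows "phi_neg_real n y < phi_neg_real n x"
proof (rule DERIV_neg_imp_decreasing_open[OF xy(2)])
  fix z assume "x < z" "z < y"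
  then have z: "0 < z" "z < 1" using xy by auto
  then have "z ^ n < 1" "1 < inverse (z ^ (n+1))"
    using n by (auto simp: power_less_one_iff intro!: one_less_inverse simp del: power_Suc)
  then show "\<exists>d. (phi_neg_real n has_real_derivative d) (at z) \<and> d < 0"
    using phi_neg_real_deriv[OF n z(1)] by auto
qed (use xy in \<open>auto intro: continuous_on_phi_neg_real[OF n]\<close>)

lemma phi_neg_real_increasing:
  assumes n: "n \<ge> 1" and xy: "1 \<le> x" "x < y"
  shows "phi_neg_real n x < phi_neg_real n y"
proof (rule DERIV_pos_imp_increasing_open[OF xy(2)])
  fix z assume "x < z" "z < y"
  then have z: "0 < z" "1 < z" using xy by auto
  then have "1 < z ^ n" "inverse (z ^ (n+1)) < 1"
    using n by (auto intro!: one_less_power simp: inverse_less_1_iff simp del: power_Suc)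
  then show "\<exists>d. (phi_neg_real n has_real_derivative d) (at z) \<and> d > 0"
    using phi_neg_real_deriv[OF n z(1)] by auto
qed (use xy in \<open>auto intro: continuous_on_phi_neg_real[OF n]\<close>)

lemma phi_neg_real_large_near_0:
  assumes n: "n \<ge> 1"
  shows "\<exists>x. 0 < x \<and> x < 1 \<and> D < phi_neg_real n x"
proof -
  define K where "K = real n * (\<bar>D\<bar> + 1) + 1"
  have "K / real n = \<bar>D\<bar> + 1 + 1 / real n" "K > 1"
    using n by (simp_all add: K_def field_simps add_pos_nonneg)
  moreover have "0 < 1 / real n"
    using n by simp
  ultimately have K: "D < K / real n" "K > 1"
    using abs_ge_self[of D] by linarith+
  have x: "0 < inverse K" "inverse K < 1"
    using K(2) by (auto simp: inverse_less_1_iff)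
  have "inverse K ^ n \<le> inverse K"
    using x power_decreasing[of 1 n "inverse K"] n by simp
  then have "K / real n \<le> inverse (inverse K ^ n) / real n"
    using x K by (intro divide_right_mono) (auto simp: le_imp_inverse_le[of _ "inverse K", simplified])
  moreover have "0 \<le> inverse K ^ (n+1) / (real n + 1)"
    using x by simp
  ultimately have "D < phi_neg_real n (inverse K)"
    unfolding phi_neg_real_def using K by linarith
  with x show ?thesis
    by blast
qed

lemma phi_neg_real_large_at_top: "\<exists>y. 1 < y \<and> D < phi_neg_real n y"
proof -
  define y where "y = (real n + 1) * (\<bar>D\<bar> + 1) + 1"
  have "0 < (real n + 1) * (\<bar>D\<bar> + 1)"
    by (simp add: add_pos_nonneg)
  then have "y / (real n + 1) = \<bar>D\<bar> + 1 + 1 / (real n + 1)" "1 < y"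
    by (simp_all add: y_def field_simps)
  moreover have "0 < 1 / (real n + 1)"
    by simp
  ultimately have y: "D < y / (real n + 1)" "1 < y"
    using abs_ge_self[of D] by linarith+
  have "y / (real n + 1) \<le> y ^ (n+1) / (real n + 1)"
    using y power_increasing[of 1 "n+1" y] by (intro divide_right_mono) auto
  moreover have "0 \<le> inverse (y ^ n) / real n"
    using y by simp
  ultimately have "D < phi_neg_real n y"
    unfolding phi_neg_real_def using y by linarith
  then show ?thesis
    using y by auto
qed

lemma phi_neg_real_level_set:
  assumes n: "n \<ge> 1" and "phi_neg_real n 1 \<noteq> c"
  shows "finite {x \<in> {0<..}. phi_neg_real n x = c}"
    "card {x \<in> {0<..}. phi_neg_real n x = c} = 2 * of_bool (phi_neg_real n 1 < c)"
proof -
  have "is_interval {0::real<..}" "continuous_on {0<..} (phi_neg_real n)"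
    by (simp_all add: is_interval_1 continuous_on_phi_neg_real[OF n])
  moreover have "\<exists>x\<in>{0<..}. x < 1 \<and> phi_neg_real n x > D" "\<exists>y\<in>{0<..}. y > 1 \<and> phi_neg_real n y > D" for D
    using phi_neg_real_large_near_0[OF n, of D] phi_neg_real_large_at_top[of D n] by auto
  ultimately show "finite {x \<in> {0<..}. phi_neg_real n x = c}"
    "card {x \<in> {0<..}. phi_neg_real n x = c} = 2 * of_bool (phi_neg_real n 1 < c)"
    using card_level_set_valley[of "{0<..}" 1 "phi_neg_real n" c] assms(2)
      phi_neg_real_decreasing[OF n] phi_neg_real_increasing[OF n]
    by auto
qed

lemma neg_real_zeros_phi_eq_image:
  "{z. Im z = 0 \<and> Re z < 0 \<and> phi n z = of_real c} =
    (\<lambda>x. of_real (- x)) ` {x \<in> {0<..}. (-1) ^ (n+1) * phi_neg_real n x = c}"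
proof (intro equalityI subsetI)
  fix z assume z: "z \<in> {z. Im z = 0 \<and> Re z < 0 \<and> phi n z = of_real c}"
  define x where "x = - Re z"
  have zx: "z = of_real (- x)"
    using z by (simp add: complex_eq_iff x_def)
  have "of_real ((-1) ^ (n+1) * phi_neg_real n x) = (of_real c :: complex)"
    using z unfolding zx mem_Collect_eq phi_of_real_neg by simp
  then have "(-1) ^ (n+1) * phi_neg_real n x = c"
    by (simp only: of_real_eq_iff)
  moreover have "x > 0"
    using z by (simp add: x_def)
  ultimately show "z \<in> (\<lambda>x. of_real (- x)) ` {x \<in> {0<..}. (-1) ^ (n+1) * phi_neg_real n x = c}"
    using zx by blast
next
  fix z :: complex assume "z \<in> (\<lambda>x. of_real (- x)) ` {x \<in> {0<..}. (-1) ^ (n+1) * phi_neg_real n x = c}"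
  then obtain x where x: "x > 0" "(-1) ^ (n+1) * phi_neg_real n x = c" "z = of_real (- x)"
    by auto
  then have "phi n z = of_real c"
    unfolding x(3) phi_of_real_neg by simp
  then show "z \<in> {z. Im z = 0 \<and> Re z < 0 \<and> phi n z = of_real c}"
    using x by simp
qed

lemma card_phi_eq_neg_real:
  assumes n: "n \<ge> 1" and c: "c > 0" and nondeg: "Re (phi n (-1)) \<noteq> c"
  shows "finite {z. Im z = 0 \<and> Re z < 0 \<and> phi n z = of_real c}"
    "card {z. Im z = 0 \<and> Re z < 0 \<and> phi n z = of_real c} = 2 * of_bool (odd n \<and> Re (phi n (-1)) < c)"
proof -
  define A where "A = {x \<in> {0<..}. (-1) ^ (n+1) * phi_neg_real n x = c}"
  have "inj_on (\<lambda>x. of_real (- x) :: complex) A"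
    by (rule inj_onI) simp
  then have card_zeros: "card {z. Im z = 0 \<and> Re z < 0 \<and> phi n z = of_real c} = card A"
    unfolding neg_real_zeros_phi_eq_image A_def[symmetric] by (rule card_image)
  have A: "finite A \<and> card A = 2 * of_bool (odd n \<and> Re (phi n (-1)) < c)"
  proof (cases "even n")
    case True
    have "A = {}"
    proof (intro equals0I)
      fix x assume "x \<in> A"
      then show False
        unfolding A_def using True phi_neg_real_pos[OF n, of x] c by simp
    qed
    then show ?thesis
      using True by simp
  next
    case False
    moreover have "Re (phi n (-1)) = (-1) ^ (n+1) * phi_neg_real n 1"
      using phi_of_real_neg[of n 1] by simp
    ultimately have "A = {x \<in> {0<..}. phi_neg_real n x = c}" "Re (phi n (-1)) = phi_neg_real n 1"
      unfolding A_def by simp_all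
    then show ?thesis
      using phi_neg_real_level_set[OF n] nondeg False by simp
  qed
  then show "finite {z. Im z = 0 \<and> Re z < 0 \<and> phi n z = of_real c}"
    unfolding neg_real_zeros_phi_eq_image A_def[symmetric] by simp
  from A show "card {z. Im z = 0 \<and> Re z < 0 \<and> phi n z = of_real c} = 2 * of_bool (odd n \<and> Re (phi n (-1)) < c)"
    unfolding card_zeros by simp
qed

section \<open>Zeros in the upper half plane\<close>

lemma angle_interval_of_sin_neg:
  assumes n: "n \<ge> 1" and t: "0 < t" "t < pi"
    and s: "sin (real n * t) < 0" "sin ((real n + 1) * t) < 0"
  shows "\<exists>j<n. odd j \<and> t \<in> angle_interval n j"
proof -
  define j where "j = nat \<lfloor>real n * t / pi\<rfloor>"
  have fl: "real j \<le> real n * t / pi" "real n * t / pi < real j + 1"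
    using t by (simp_all add: j_def)
  have "real j * pi \<noteq> real n * t"
  proof
    assume "real j * pi = real n * t"
    then have "sin (real n * t) = 0" by (metis sin_npi)
    with s(1) show False by simp
  qed
  then have j_lt: "real j * pi < real n * t"
    using fl(1) by (simp add: field_simps)
  have nt_lt: "real n * t < (real j + 1) * pi"
    using fl(2) by (simp add: field_simps)
  have "(-1) ^ j * sin (real n * t) > 0"
    using sin_alternating_sign[OF j_lt nt_lt] .
  then have "odd j"
    using s(1) by (auto simp: mult_less_0_iff)
  have "real n * t < real n * pi"
    using t n by simp
  then have "real j * pi < real n * pi"
    using j_lt by linarith
  then have "j < n" by simp
  have "(real n + 1) * t < (real j + 1) * pi"
  proof (rule ccontr)
    assume "\<not> ?thesis"
    moreover have "real (Suc j) * pi \<noteq> (real n + 1) * t"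
    proof
      assume "real (Suc j) * pi = (real n + 1) * t"
      then have "sin ((real n + 1) * t) = 0" by (metis sin_npi)
      with s(2) show False by simp
    qed
    ultimately have "real (Suc j) * pi < (real n + 1) * t"
      by (simp add: add.commute)
    moreover have "(real n + 1) * t < (real (Suc j) + 1) * pi"
      using nt_lt t by (simp add: algebra_simps)
    ultimately have "(-1) ^ Suc j * sin ((real n + 1) * t) > 0"
      by (rule sin_alternating_sign)
    with \<open>odd j\<close> s(2) show False by simp
  qed
  then have "t \<in> angle_interval n j"
    using j_lt n by (simp add: angle_interval_def field_simps)
  with \<open>j < n\<close> \<open>odd j\<close> show ?thesis by blast
qed

lemma angle_interval_disjoint:
  assumes "n \<ge> 1" "i \<noteq> j"
  shows "angle_interval n i \<inter> angle_interval n j = {}"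
proof -
  have "angle_interval n i \<inter> angle_interval n j = {}" if "i < j" for i j
  proof -
    have "(real i + 1) * pi / (real n + 1) < (real i + 1) * pi / real n"
      using angle_interval_right_less_next_left[OF assms(1)] .
    also have "\<dots> \<le> real j * pi / real n"
      using that assms(1) by (intro divide_right_mono mult_right_mono) auto
    finally show ?thesis
      by (auto simp: angle_interval_def)
  qed
  then show ?thesis
    using assms(2) by (metis Int_commute linorder_neqE_nat)
qed

text \<open>Solving \<open>\<phi>(e^(r+it)) = c\<close> for \<open>r\<close> gives \<open>r = log_radius n t\<close>; eliminating \<open>r\<close> leaves the
  equation \<open>angle_level n t = level_const n c\<close> (see \<open>phi_exp_Complex_eq_of_real_iff\<close>).\<close>
definition log_radius :: "nat \<Rightarrow> real \<Rightarrow> real" where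
  "log_radius n t = (ln (real n + 1) + ln (- sin (real n * t)) - ln (real n)
     - ln (- sin ((real n + 1) * t))) / (2 * real n + 1)"

definition angle_level :: "nat \<Rightarrow> real \<Rightarrow> real" where
  "angle_level n t = (2 * real n + 1) * ln (sin t) - (real n + 1) * ln (- sin ((real n + 1) * t))
     - real n * ln (- sin (real n * t))"

definition level_const :: "nat \<Rightarrow> real \<Rightarrow> real" where
  "level_const n c = (2 * real n + 1) * ln c + real n * ln (real n + 1) + (real n + 1) * ln (real n)"

lemma level_const_less_iff: "n \<ge> 1 \<Longrightarrow> x > 0 \<Longrightarrow> y > 0 \<Longrightarrow> level_const n x < level_const n y \<longleftrightarrow> x < y"
  unfolding level_const_def by simp

lemma phi_exp_Complex_eq_of_real_iff_exp:
  assumes n: "n \<ge> 1" and t: "0 < t" "t < pi"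
  shows "phi n (exp (Complex r t)) = of_real c \<longleftrightarrow>
    exp ((real n + 1) * r) * sin ((real n + 1) * t) / (real n + 1) = exp (- (real n * r)) * sin (real n * t) / real n \<and>
    c * sin ((real n + 1) * t) = - exp (- (real n * r)) * sin t / real n"
    (is "_ \<longleftrightarrow> ?Q \<and> ?R")
proof -
  define N sA sB cA cB E1 E2 where "N = real n" "sA = sin (N * t)" "sB = sin ((N + 1) * t)"
    "cA = cos (N * t)" "cB = cos ((N + 1) * t)" "E1 = exp ((N + 1) * r)" "E2 = exp (- (N * r))"
  note defs = N_sA_sB_cA_cB_E1_E2_def
  have N: "N \<ge> 1" and E2: "E2 > 0" and st: "sin t > 0"
    using n t by (simp_all add: defs sin_gt_zero)
  have "sin t = sin ((N + 1) * t - N * t)"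
    by (simp add: algebra_simps)
  then have sin_t: "sin t = sB * cA - cB * sA"
    unfolding defs sin_diff by simp
  have phi_eq: "phi n (exp (Complex r t)) = of_real c \<longleftrightarrow> E1 * cB / (N + 1) - E2 * cA / N = c \<and> ?Q"
    unfolding phi_exp_Complex[OF n] by (auto simp: complex_eq_iff defs)
  have key: "(E1 * cB / (N + 1) - E2 * cA / N) * sB = - E2 * sin t / N" if ?Q
  proof -
    have q: "E1 * sB / (N + 1) = E2 * sA / N"
      using that by (simp add: defs)
    have "(E1 * cB / (N + 1) - E2 * cA / N) * sB = cB * (E1 * sB / (N + 1)) - E2 * cA * sB / N"
      using N by (simp add: field_simps)
    also have "\<dots> = - E2 * (sB * cA - cB * sA) / N"
      unfolding q using N by (simp add: field_simps)
    finally show ?thesis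
      unfolding sin_t .
  qed
  show ?thesis
  proof
    assume "phi n (exp (Complex r t)) = of_real c"
    then show "?Q \<and> ?R"
      using phi_eq key by (auto simp: defs)
  next
    assume QR: "?Q \<and> ?R"
    then have "sB \<noteq> 0"
      using E2 st N by (auto simp: defs)
    moreover have "(E1 * cB / (N + 1) - E2 * cA / N) * sB = c * sB"
      using key QR by (simp add: defs)
    ultimately show "phi n (exp (Complex r t)) = of_real c"
      using phi_eq QR by simp
  qed
qed

lemma exp_eq_iff_log_radius_angle_level:
  assumes n: "n \<ge> 1" and s: "sin t > 0" "sin (real n * t) < 0" "sin ((real n + 1) * t) < 0"
    and c: "c > 0"
  shows "exp ((2 * real n + 1) * r) = (real n + 1) * sin (real n * t) / (real n * sin ((real n + 1) * t)) \<and>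
      exp (- (real n * r)) = c * real n * - sin ((real n + 1) * t) / sin t
    \<longleftrightarrow> r = log_radius n t \<and> angle_level n t = level_const n c"
proof -
  define N sA sB where "N = real n" "sA = sin (N * t)" "sB = sin ((N + 1) * t)"
  have N: "N \<ge> 1" and sA: "sA < 0" and sB: "sB < 0"
    using n s by (simp_all add: N_sA_sB_def)
  have exp_iff: "exp x = y \<longleftrightarrow> x = ln y" if "y > 0" for x y :: real
    using that by auto
  have ln_ratio: "ln ((N + 1) * sA / (N * sB)) = ln (N + 1) + ln (- sA) - ln N - ln (- sB)"
    using ln_div[of "(N + 1) * - sA" "N * - sB"] ln_mult[of "N + 1" "- sA"] ln_mult[of N "- sB"] N sA sB
    by simp
  have ln_modulus: "ln (c * N * - sB / sin t) = ln c + ln N + ln (- sB) - ln (sin t)"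
    using ln_div[of "c * N * - sB" "sin t"] ln_mult[of "c * N" "- sB"] ln_mult[of c N] N sB c s(1)
    by simp
  have pos_ratio: "(N + 1) * sA / (N * sB) > 0"
    using N sA sB by (intro divide_neg_neg mult_pos_neg) auto
  have pos_modulus: "c * N * - sB / sin t > 0"
    using N sB c s(1) by (intro divide_pos_pos mult_pos_pos) auto
  have "exp ((2 * N + 1) * r) = (N + 1) * sA / (N * sB) \<and> exp (- (N * r)) = c * N * - sB / sin t
      \<longleftrightarrow> (2 * N + 1) * r = ln (N + 1) + ln (- sA) - ln N - ln (- sB) \<and>
        - (N * r) = ln c + ln N + ln (- sB) - ln (sin t)"
    by (simp only: exp_iff[OF pos_ratio] exp_iff[OF pos_modulus] ln_ratio ln_modulus)
  also have "(2 * N + 1) * r = ln (N + 1) + ln (- sA) - ln N - ln (- sB) \<longleftrightarrow> r = log_radius n t"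
    using N by (auto simp: log_radius_def N_sA_sB_def field_simps)
  also have "r = log_radius n t \<and> - (N * r) = ln c + ln N + ln (- sB) - ln (sin t) \<longleftrightarrow>
      r = log_radius n t \<and> - (N * log_radius n t) = ln c + ln N + ln (- sB) - ln (sin t)"
    by auto
  also have "- (N * log_radius n t) = ln c + ln N + ln (- sB) - ln (sin t) \<longleftrightarrow>
      angle_level n t = level_const n c"
    using N unfolding log_radius_def angle_level_def level_const_def N_sA_sB_def
    by (simp add: field_simps)
  finally show ?thesis
    by (simp add: N_sA_sB_def)
qed

lemma phi_exp_Complex_eq_of_real_iff:
  assumes n: "n \<ge> 1" and c: "c > 0" and t: "0 < t" "t < pi"
  shows "phi n (exp (Complex r t)) = of_real c \<longleftrightarrow>
    sin (real n * t) < 0 \<and> sin ((real n + 1) * t) < 0 \<and> r = log_radius n t \<and> angle_level n t = level_const n c"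
proof -
  define N sA sB E1 E2 where "N = real n" "sA = sin (N * t)" "sB = sin ((N + 1) * t)"
    "E1 = exp ((N + 1) * r)" "E2 = exp (- (N * r))"
  note defs = N_sA_sB_E1_E2_def
  have N: "N \<ge> 1" and E: "E1 > 0" "E2 > 0" and st: "sin t > 0"
    using n t by (simp_all add: defs sin_gt_zero)
  have E12: "exp ((2 * N + 1) * r) = E1 / E2"
    by (simp add: defs field_simps flip: exp_add)
  have "E1 * sB / (N + 1) = E2 * sA / N \<and> c * sB = - E2 * sin t / N \<longleftrightarrow>
      sA < 0 \<and> sB < 0 \<and> exp ((2 * N + 1) * r) = (N + 1) * sA / (N * sB) \<and> E2 = c * N * - sB / sin t"
  proof (cases "sB < 0")
    case True
    have "E1 * sB / (N + 1) < 0"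
      using True E N by (intro divide_neg_pos mult_pos_neg) auto
    then have "E1 * sB / (N + 1) = E2 * sA / N \<Longrightarrow> sA < 0"
      using E N by (simp add: zero_less_mult_iff divide_less_0_iff mult_less_0_iff)
    moreover have "E1 * sB / (N + 1) = E2 * sA / N \<longleftrightarrow> E1 / E2 = (N + 1) * sA / (N * sB)"
      using E N True by (auto simp: field_simps)
    moreover have "c * sB = - E2 * sin t / N \<longleftrightarrow> E2 = c * N * - sB / sin t"
      using st N by (auto simp: field_simps)
    ultimately show ?thesis
      using True unfolding E12 by blast
  next
    case False
    then have "c * sB \<ge> 0"
      using c by simp
    moreover have "- E2 * sin t / N < 0"
      using E st N by simp
    ultimately show ?thesis
      using False by auto
  qed
  then show ?thesis
    unfolding phi_exp_Complex_eq_of_real_iff_exp[OF n t]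
    using exp_eq_iff_log_radius_angle_level[OF n st _ _ c, of r]
    by (auto simp: defs)
qed

lemma sin_cos_angle_level_identity:
  fixes A t N :: real
  shows "(2 * N + 1) * cos t * sin (A + t) * sin A - (N + 1)\<^sup>2 * cos (A + t) * sin t * sin A
      - N\<^sup>2 * cos A * sin t * sin (A + t) = (N + 1)\<^sup>2 * (sin A)\<^sup>2 - N\<^sup>2 * (sin (A + t))\<^sup>2"
proof -
  have "sin t ^ 2 + cos t ^ 2 = 1" by simp
  then show ?thesis
    unfolding sin_add cos_add by algebra
qed

lemma angle_level_deriv_sgn:
  assumes n: "n \<ge> 1" and s: "sin t > 0" "sin (real n * t) < 0" "sin ((real n + 1) * t) < 0"
  shows "\<exists>D. (angle_level n has_real_derivative D) (at t) \<and> sgn D = sgn (phi_cis_Im n t)"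
proof -
  define N sA sB cA cB where "N = real n" "sA = sin (N * t)" "sB = sin ((N + 1) * t)"
    "cA = cos (N * t)" "cB = cos ((N + 1) * t)"
  note defs = N_sA_sB_cA_cB_def
  have N: "N \<ge> 1" and sA: "sA < 0" and sB: "sB < 0"
    using n s by (simp_all add: defs)
  define D where "D = (2 * N + 1) * cos t / sin t - (N + 1)\<^sup>2 * cB / sB - N\<^sup>2 * cA / sA"
  have "(angle_level n has_real_derivative D) (at t)"
  proof -
    have "(angle_level n has_real_derivative cos t * (2 * N + 1) / sin t
        - cos ((N + 1) * t) * (N + 1) * (N + 1) / sin ((N + 1) * t)
        - cos (N * t) * N * N / sin (N * t)) (at t)"
      unfolding angle_level_def[abs_def] using s by (auto intro!: derivative_eq_intros simp: defs)
    then show ?thesis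
      using sA sB by (simp add: D_def defs power2_eq_square field_simps)
  qed
  moreover have "sgn D = sgn (phi_cis_Im n t)"
  proof -
    have "(N + 1) * t = N * t + t"
      by (simp add: algebra_simps)
    then have "D * (sin t * sA * sB) = (2 * N + 1) * cos t * sin (N * t + t) * sin (N * t)
        - (N + 1)\<^sup>2 * cos (N * t + t) * sin t * sin (N * t) - N\<^sup>2 * cos (N * t) * sin t * sin (N * t + t)"
      using s(1) sA sB unfolding D_def defs by (simp add: field_simps)
    also have "\<dots> = (N + 1)\<^sup>2 * sA\<^sup>2 - N\<^sup>2 * sB\<^sup>2"
      unfolding sin_cos_angle_level_identity by (simp add: defs algebra_simps)
    also have "\<dots> = (N * sB - (N + 1) * sA) * (- (N + 1) * sA - N * sB)"
      by (simp add: power2_eq_square algebra_simps)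
    also have "N * sB - (N + 1) * sA = N * (N + 1) * phi_cis_Im n t"
    proof -
      have "phi_cis_Im n t = sB / (N + 1) - sA / N"
        by (simp add: phi_cis_Im_def defs)
      moreover have "N + N * N \<noteq> 0"
        using N by (smt (verit) mult_nonneg_nonneg)
      ultimately show ?thesis
        using N by (simp add: field_simps)
    qed
    finally have "sgn D * sgn (sin t * sA * sB) = sgn (N * (N + 1)) * sgn (phi_cis_Im n t) * sgn (- (N + 1) * sA - N * sB)"
      by (metis sgn_mult)
    moreover have "sin t * sA * sB > 0"
      using s(1) sA sB by (intro mult_neg_neg mult_pos_neg)
    moreover have "N * (N + 1) > 0"
      using N by simp
    moreover have "(N + 1) * sA < 0" "N * sB < 0"
      using sA sB N by (simp_all add: mult_pos_neg)
    then have "- (N + 1) * sA - N * sB > 0"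
      by linarith
    ultimately show ?thesis
      by simp
  qed
  ultimately show ?thesis by blast
qed

lemma sin_signs_odd_angle_interval:
  assumes "j < n" "odd j" "t \<in> angle_interval n j"
  shows "sin t > 0" "sin (real n * t) < 0" "sin ((real n + 1) * t) < 0"
  using sin_signs_angle_interval[OF assms(1,3)] assms(2) by (auto intro: sin_gt_zero)

lemma angle_level_at_top_left:
  assumes n: "n \<ge> 1" and j: "j < n" "odd j"
  shows "filterlim (angle_level n) at_top (at_right (real j * pi / real n))"
proof -
  define N l where "N = real n" "l = real j * pi / real n"
  have N: "N \<ge> 1" using n by (simp add: N_l_def)
  have "eventually (\<lambda>t. t \<in> angle_interval n j) (at_right l)"
    unfolding eventually_at_right_field angle_interval_def N_l_def
    using angle_interval_left_less_right[OF j(1)] by auto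
  then have "eventually (\<lambda>t. - sin (N * t) > 0) (at_right l)"
    by eventually_elim (use sin_signs_odd_angle_interval[OF j] in \<open>simp add: N_l_def\<close>)
  moreover have "((\<lambda>t. - sin (N * t)) \<longlongrightarrow> 0) (at_right l)"
    using sin_npi[of j] N by (auto intro!: tendsto_eq_intros simp: N_l_def)
  moreover have "sin l > 0"
  proof (rule sin_gt_zero)
    show "0 < l"
      using odd_pos[OF j(2)] n by (simp add: N_l_def)
    show "l < pi"
      using j by (simp add: N_l_def field_simps)
  qed
  moreover have "(-1) ^ j * sin ((N + 1) * l) > 0"
    using N j odd_pos[OF j(2)] by (intro sin_alternating_sign) (auto simp: N_l_def field_simps)
  ultimately have "filterlim (\<lambda>t. ((2 * N + 1) * ln (sin t) - (N + 1) * ln (- sin ((N + 1) * t)))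
      - N * ln (- sin (N * t))) at_top (at_right l)"
    using N j(2) by (intro filterlim_minus_ln_at_top) (auto intro!: tendsto_eq_intros)
  then show ?thesis
    by (simp add: angle_level_def[abs_def] N_l_def)
qed

lemma angle_level_at_top_right:
  assumes n: "n \<ge> 1" and j: "j < n" "odd j"
  shows "filterlim (angle_level n) at_top (at_left ((real j + 1) * pi / (real n + 1)))"
proof -
  define N r where "N = real n" "r = (real j + 1) * pi / (real n + 1)"
  have N: "N \<ge> 1" using n by (simp add: N_r_def)
  have pi_j: "0 < pi + pi * real j"
    by (simp add: add_pos_nonneg)
  have "eventually (\<lambda>t. t \<in> angle_interval n j) (at_left r)"
    unfolding eventually_at_left_field angle_interval_def N_r_def
    using angle_interval_left_less_right[OF j(1)] by auto
  then have "eventually (\<lambda>t. - sin ((N + 1) * t) > 0) (at_left r)"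
    by eventually_elim (use sin_signs_odd_angle_interval[OF j] in \<open>simp add: N_r_def\<close>)
  moreover have "((\<lambda>t. - sin ((N + 1) * t)) \<longlongrightarrow> 0) (at_left r)"
    using sin_npi[of "Suc j"]
    by (auto intro!: tendsto_eq_intros simp: N_r_def add.commute)
  moreover have "sin r > 0"
  proof (rule sin_gt_zero)
    show "0 < r"
      using pi_j by (simp add: N_r_def field_simps)
    show "r < pi"
      using j by (simp add: N_r_def field_simps)
  qed
  moreover have "(-1) ^ j * sin (N * r) > 0"
    using N j pi_j by (intro sin_alternating_sign) (auto simp: N_r_def field_simps)
  ultimately have "filterlim (\<lambda>t. ((2 * N + 1) * ln (sin t) - N * ln (- sin (N * t)))
      - (N + 1) * ln (- sin ((N + 1) * t))) at_top (at_left r)"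
    using N j(2) by (intro filterlim_minus_ln_at_top) (auto intro!: tendsto_eq_intros)
  then show ?thesis
    by (simp add: angle_level_def[abs_def] N_r_def algebra_simps)
qed

lemma angle_level_level_set:
  assumes n: "n \<ge> 1" and j: "j < n" "odd j" and nondeg: "angle_level n (zero_angle n j) \<noteq> L"
  shows "finite {t \<in> angle_interval n j. angle_level n t = L}"
    "card {t \<in> angle_interval n j. angle_level n t = L} = 2 * of_bool (angle_level n (zero_angle n j) < L)"
proof -
  let ?\<tau> = "zero_angle n j"
  obtain l r where J: "angle_interval n j = {l<..<r}"
    and l: "l = real j * pi / real n" and r: "r = (real j + 1) * pi / (real n + 1)"
    by (simp add: angle_interval_def)
  have \<tau>: "?\<tau> \<in> angle_interval n j" "phi_cis_Im n ?\<tau> = 0"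
    using zero_angle_in_angle_interval[of j n] j odd_pos[OF j(2)] by auto
  have deriv: "\<exists>D. (angle_level n has_real_derivative D) (at t) \<and> sgn D = sgn (phi_cis_Im n t)"
    if "t \<in> angle_interval n j" for t
    using angle_level_deriv_sgn[OF n sin_signs_odd_angle_interval[OF j that]] .
  have cont: "continuous_on (angle_interval n j) (angle_level n)"
    using deriv by (intro continuous_at_imp_continuous_on) (auto intro: DERIV_isCont)
  have Im_less: "phi_cis_Im n x < phi_cis_Im n y" if "x \<in> angle_interval n j" "y \<in> angle_interval n j" "x < y" for x y
    using phi_cis_Im_strict_mono[OF n, of j x y] that j crit_angle_le_angle_interval_left[OF n, of j]
      angle_interval_right_le_crit_angle[of j n]
    by (auto simp: J l r)
  have dec: "angle_level n y < angle_level n x"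
    if "x \<in> angle_interval n j" "x < y" "y \<le> ?\<tau>" for x y
  proof (rule DERIV_neg_imp_decreasing_open[OF that(2)])
    fix z assume z: "x < z" "z < y"
    then have "z \<in> angle_interval n j" "z < ?\<tau>"
      using that \<tau>(1) by (auto simp: J)
    then have "phi_cis_Im n z < 0"
      using Im_less[of z ?\<tau>] \<tau> by simp
    then show "\<exists>D. (angle_level n has_real_derivative D) (at z) \<and> D < 0"
      using deriv[OF \<open>z \<in> angle_interval n j\<close>] by (auto simp: sgn_if split: if_splits)
  qed (use that \<tau>(1) in \<open>auto simp: J intro: continuous_on_subset[OF cont]\<close>)
  have inc: "angle_level n x < angle_level n y"
    if "?\<tau> \<le> x" "x < y" "y \<in> angle_interval n j" for x y
  proof (rule DERIV_pos_imp_increasing_open[OF that(2)])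
    fix z assume z: "x < z" "z < y"
    then have "z \<in> angle_interval n j" "?\<tau> < z"
      using that \<tau>(1) by (auto simp: J)
    then have "phi_cis_Im n z > 0"
      using Im_less[of ?\<tau> z] \<tau> by simp
    then show "\<exists>D. (angle_level n has_real_derivative D) (at z) \<and> D > 0"
      using deriv[OF \<open>z \<in> angle_interval n j\<close>] by (auto simp: sgn_if split: if_splits)
  qed (use that \<tau>(1) in \<open>auto simp: J intro: continuous_on_subset[OF cont]\<close>)
  have "l < ?\<tau>" "?\<tau> < r"
    using \<tau>(1) by (auto simp: J)
  have left: "\<exists>x\<in>angle_interval n j. x < ?\<tau> \<and> angle_level n x > C" for C
    using filterlim_at_top_at_right_ex[OF angle_level_at_top_left[OF n j, folded l] \<open>l < ?\<tau>\<close>, of C]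
      \<open>?\<tau> < r\<close> by (auto simp: J)
  have right: "\<exists>x\<in>angle_interval n j. x > ?\<tau> \<and> angle_level n x > C" for C
    using filterlim_at_top_at_left_ex[OF angle_level_at_top_right[OF n j, folded r] \<open>?\<tau> < r\<close>, of C]
      \<open>l < ?\<tau>\<close> by (auto simp: J)
  have "is_interval (angle_interval n j)"
    by (simp add: J is_interval_1)
  from card_level_set_valley[OF this \<tau>(1) cont dec inc left right nondeg]
  show "finite {t \<in> angle_interval n j. angle_level n t = L}"
    "card {t \<in> angle_interval n j. angle_level n t = L} = 2 * of_bool (angle_level n (zero_angle n j) < L)"
    by simp_all
qed

lemma zero_angle_odd:
  assumes n: "n \<ge> 1" and j: "j < n" "odd j"
  shows "Re (phi n (cis (zero_angle n j))) > 0"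
    "angle_level n (zero_angle n j) = level_const n (Re (phi n (cis (zero_angle n j))))"
proof -
  let ?t = "zero_angle n j"
  let ?v = "Re (phi n (cis ?t))"
  have t: "?t \<in> angle_interval n j" "phi_cis_Im n ?t = 0"
    using zero_angle_in_angle_interval[of j n] j odd_pos[OF j(2)] by auto
  note s = sin_signs_odd_angle_interval[OF j t(1)]
  have "?v * sin ((real n + 1) * ?t) = - sin ?t / real n"
    by (rule Re_phi_cis_mult_sin[OF n t(2)])
  moreover have "- sin ?t / real n < 0"
    using s(1) n by simp
  ultimately have "?v * sin ((real n + 1) * ?t) < 0"
    by linarith
  then show v: "?v > 0"
    using s(3) by (simp add: mult_less_0_iff)
  have "phi n (exp (Complex 0 ?t)) = of_real ?v"
    using Im_phi_cis[OF n, of ?t] t(2) by (simp add: complex_eq_iff cis_eq_exp_Complex)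
  then show "angle_level n ?t = level_const n ?v"
    using phi_exp_Complex_eq_of_real_iff[OF n v] sin_signs_angle_interval(3,4)[OF j(1) t(1)] by blast
qed

lemma upper_zeros_phi_eq_image:
  assumes n: "n \<ge> 1" and c: "c > 0"
  shows "{z. Im z > 0 \<and> phi n z = of_real c} = (\<lambda>t. exp (Complex (log_radius n t) t)) `
    (\<Union>j\<in>{j. j < n \<and> odd j}. {t \<in> angle_interval n j. angle_level n t = level_const n c})"
proof (intro equalityI subsetI)
  fix z assume z: "z \<in> {z. Im z > 0 \<and> phi n z = of_real c}"
  then have "z \<noteq> 0" by auto
  define w where "w = Ln z"
  have zw: "z = exp (Complex (Re w) (Im w))"
    using \<open>z \<noteq> 0\<close> unfolding complex.collapse w_def by simp
  have t: "0 < Im w" "Im w < pi"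
    using Im_Ln_pos_lt[OF \<open>z \<noteq> 0\<close>] z by (auto simp: w_def)
  have "phi n (exp (Complex (Re w) (Im w))) = of_real c"
    using z zw by simp
  then have conds: "sin (real n * Im w) < 0 \<and> sin ((real n + 1) * Im w) < 0 \<and> Re w = log_radius n (Im w)
      \<and> angle_level n (Im w) = level_const n c"
    using phi_exp_Complex_eq_of_real_iff[OF n c t, of "Re w"] by blast
  moreover from this obtain j where "j < n" "odd j" "Im w \<in> angle_interval n j"
    using angle_interval_of_sin_neg[OF n t] by blast
  ultimately have "Im w \<in> (\<Union>j\<in>{j. j < n \<and> odd j}. {t \<in> angle_interval n j. angle_level n t = level_const n c})"
    by blast
  moreover have "z = exp (Complex (log_radius n (Im w)) (Im w))"
    using zw conds by simp
  ultimately show "z \<in> (\<lambda>t. exp (Complex (log_radius n t) t)) `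
      (\<Union>j\<in>{j. j < n \<and> odd j}. {t \<in> angle_interval n j. angle_level n t = level_const n c})"
    by (rule rev_image_eqI)
next
  fix z assume "z \<in> (\<lambda>t. exp (Complex (log_radius n t) t)) `
      (\<Union>j\<in>{j. j < n \<and> odd j}. {t \<in> angle_interval n j. angle_level n t = level_const n c})"
  then obtain t j where z: "z = exp (Complex (log_radius n t) t)" and j: "j < n" "odd j"
    and t: "t \<in> angle_interval n j" "angle_level n t = level_const n c"
    by auto
  note s = sin_signs_odd_angle_interval[OF j t(1)]
  have "phi n z = of_real c"
    unfolding z using phi_exp_Complex_eq_of_real_iff[OF n c sin_signs_angle_interval(3,4)[OF j(1) t(1)]] s t
    by simp
  moreover have "Im z > 0"
    using s(1) by (simp add: z exp_Complex)
  ultimately show "z \<in> {z. Im z > 0 \<and> phi n z = of_real c}"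
    by simp
qed

lemma card_phi_eq_upper:
  assumes n: "n \<ge> 1" and c: "c > 0"
    and nondeg: "\<And>j. j < n \<Longrightarrow> odd j \<Longrightarrow> Re (phi n (cis (zero_angle n j))) \<noteq> c"
  shows "finite {z. Im z > 0 \<and> phi n z = of_real c}"
    "card {z. Im z > 0 \<and> phi n z = of_real c} =
      2 * card {j. j < n \<and> odd j \<and> Re (phi n (cis (zero_angle n j))) < c}"
proof -
  define Od where "Od = {j. j < n \<and> odd j}"
  define T where "T j = {t \<in> angle_interval n j. angle_level n t = level_const n c}" for j
  define polar where "polar t = exp (Complex (log_radius n t) t)" for t
  have T: "finite (T j) \<and> card (T j) = 2 * of_bool (Re (phi n (cis (zero_angle n j))) < c)" if "j \<in> Od" for j
  proof -
    have j: "j < n" "odd j" using that by (auto simp: Od_def)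
    note v = zero_angle_odd[OF n j]
    have "level_const n (Re (phi n (cis (zero_angle n j)))) \<noteq> level_const n c"
      using nondeg[OF j] level_const_less_iff[OF n v(1) c] level_const_less_iff[OF n c v(1)]
      by (metis linorder_neqE_linordered_idom order_less_irrefl)
    then show ?thesis
      using angle_level_level_set[OF n j, of "level_const n c"] level_const_less_iff[OF n v(1) c]
      unfolding T_def v(2) by simp
  qed
  have disjoint: "T i \<inter> T j = {}" if "i \<noteq> j" for i j
    using angle_interval_disjoint[OF n that] by (auto simp: T_def)
  have "inj_on polar (\<Union>j\<in>Od. T j)"
  proof (rule inj_onI)
    fix s t assume "s \<in> (\<Union>j\<in>Od. T j)" "t \<in> (\<Union>j\<in>Od. T j)" "polar s = polar t"
    moreover have "Ln (polar x) = Complex (log_radius n x) x" if x: "x \<in> (\<Union>j\<in>Od. T j)" for x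
    proof -
      obtain j where "j < n" "x \<in> angle_interval n j"
        using x unfolding T_def Od_def by blast
      then have "0 < x" "x < pi"
        by (blast intro: sin_signs_angle_interval(3,4))+
      then show ?thesis
        unfolding polar_def by (intro Ln_exp) auto
    qed
    ultimately show "s = t"
      by (metis complex.inject)
  qed
  moreover have "finite Od" by (simp add: Od_def)
  ultimately have "finite (polar ` (\<Union>j\<in>Od. T j))"
    "card (polar ` (\<Union>j\<in>Od. T j)) = (\<Sum>j\<in>Od. 2 * of_bool (Re (phi n (cis (zero_angle n j))) < c))"
    using T disjoint by (simp_all add: card_image card_UN_disjoint)
  moreover have "(\<Sum>j\<in>Od. 2 * of_bool (Re (phi n (cis (zero_angle n j))) < c)) =
      2 * card {j. j < n \<and> odd j \<and> Re (phi n (cis (zero_angle n j))) < c}"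
    using \<open>finite Od\<close> by (simp add: sum_distrib_left[symmetric] Od_def Int_def conj_assoc)
  ultimately show "finite {z. Im z > 0 \<and> phi n z = of_real c}"
    "card {z. Im z > 0 \<and> phi n z = of_real c} =
      2 * card {j. j < n \<and> odd j \<and> Re (phi n (cis (zero_angle n j))) < c}"
    unfolding upper_zeros_phi_eq_image[OF n c] by (simp_all add: Od_def T_def polar_def)
qed

lemma alternating_sum_even_ones:
  fixes e :: "nat \<Rightarrow> real"
  assumes "\<And>i. i \<le> N \<Longrightarrow> even i \<Longrightarrow> e i = 1"
  shows "(\<Sum>j<N. (-1) ^ (j+1) * (e (Suc j) - e j)) =
    real N - 2 * (\<Sum>j | j < N \<and> odd j. e j) - (if odd N then e N else 0)"
  using assms
proof (induction N)
  case (Suc N)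
  have IH: "(\<Sum>j<N. (-1) ^ (j+1) * (e (Suc j) - e j)) =
      real N - 2 * (\<Sum>j | j < N \<and> odd j. e j) - (if odd N then e N else 0)"
    using Suc by auto
  have odd_below: "{j. j < Suc N \<and> odd j} = (if odd N then insert N {j. j < N \<and> odd j} else {j. j < N \<and> odd j})"
    by (auto simp: less_Suc_eq)
  show ?case
    using IH Suc.prems[of N] Suc.prems[of "Suc N"]
    by (cases "odd N") (simp_all add: odd_below algebra_simps)
qed simp

lemma card_zeros_f_a:
  assumes n: "n \<ge> 1" and a: "a > 1" and no_zero: "\<forall>z. cmod z = 1 \<longrightarrow> f_a n a z \<noteq> 0"
  shows "real (card {z. z \<noteq> 0 \<and> f_a n a z = 0}) = 1 + 2 * (if odd n then below_level n (1 / (a + 1)) n else 0)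
    + 4 * (\<Sum>j | j < n \<and> odd j. below_level n (1 / (a + 1)) j)"
proof -
  define c where "c = 1 / (a + 1)"
  have c: "0 < c" "c < 1/2"
    using a by (auto simp: c_def field_simps)
  have nondeg: "Re (phi n (cis (zero_angle n j))) \<noteq> c" if "j \<le> n" for j
  proof
    assume "Re (phi n (cis (zero_angle n j))) = c"
    moreover have "Im (phi n (cis (zero_angle n j))) = 0"
      using phi_cis_Im_zero_angle[OF that] by (simp add: Im_phi_cis[OF n])
    moreover have "a + 1 \<noteq> 0"
      using a by simp
    ultimately have "f_a n a (cis (zero_angle n j)) = 0"
      by (simp add: complex_eq_iff Re_f_a Im_f_a c_def)
    with no_zero show False by simp
  qed
  define Z where "Z P = {z. P z \<and> phi n z = of_real c}" for P
  have zeros: "{z. z \<noteq> 0 \<and> f_a n a z = 0} =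
      Z (\<lambda>z. Im z = 0 \<and> Re z > 0) \<union> Z (\<lambda>z. Im z = 0 \<and> Re z < 0) \<union> Z (\<lambda>z. Im z > 0) \<union> Z (\<lambda>z. Im z < 0)"
  proof -
    have "z \<noteq> 0 \<longleftrightarrow> (Im z = 0 \<and> Re z > 0) \<or> (Im z = 0 \<and> Re z < 0) \<or> Im z > 0 \<or> Im z < 0" for z
      by (auto simp: complex_eq_iff)
    then show ?thesis
      unfolding Z_def f_a_eq_0_iff[OF a] c_def by blast
  qed
  have lower: "Z (\<lambda>z. Im z < 0) = cnj ` Z (\<lambda>z. Im z > 0)"
    by (force simp: Z_def phi_cnj intro: image_eqI[of _ cnj "cnj _"])
  have neg: "finite (Z (\<lambda>z. Im z = 0 \<and> Re z < 0))"
    "real (card (Z (\<lambda>z. Im z = 0 \<and> Re z < 0))) = 2 * (if odd n then below_level n c n else 0)"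
    using card_phi_eq_neg_real[OF n c(1)] nondeg[of n] n by (simp_all add: Z_def below_level_def)
  have upper: "finite (Z (\<lambda>z. Im z > 0))"
    "real (card (Z (\<lambda>z. Im z > 0))) = 2 * (\<Sum>j | j < n \<and> odd j. below_level n c j)"
    using card_phi_eq_upper[OF n c(1)] nondeg by (simp_all add: Z_def below_level_def Int_def conj_assoc)
  have pos: "card (Z (\<lambda>z. Im z = 0 \<and> Re z > 0)) = 1"
    using card_phi_eq_pos_real[OF n c] by (simp add: Z_def)
  then have "finite (Z (\<lambda>z. Im z = 0 \<and> Re z > 0))"
    by (intro card_ge_0_finite) simp
  have card4: "card (A \<union> B \<union> C \<union> D) = card A + card B + card C + card D"
    if "finite A" "finite B" "finite C" "finite D" "A \<inter> B = {}" "(A \<union> B) \<inter> C = {}" "(A \<union> B \<union> C) \<inter> D = {}"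
    for A B C D :: "complex set"
    using that by (simp add: card_Un_disjoint)
  have "card {z. z \<noteq> 0 \<and> f_a n a z = 0} = card (Z (\<lambda>z. Im z = 0 \<and> Re z > 0))
      + card (Z (\<lambda>z. Im z = 0 \<and> Re z < 0)) + card (Z (\<lambda>z. Im z > 0)) + card (Z (\<lambda>z. Im z < 0))"
    unfolding zeros
  proof (rule card4)
    show "finite (Z (\<lambda>z. Im z < 0))"
      unfolding lower using upper(1) by simp
  qed (use neg(1) upper(1) \<open>finite (Z (\<lambda>z. Im z = 0 \<and> Re z > 0))\<close> in \<open>auto simp: Z_def\<close>)
  moreover have "card (Z (\<lambda>z. Im z < 0)) = card (Z (\<lambda>z. Im z > 0))"
    unfolding lower by (rule card_image) (simp add: inj_on_def)
  ultimately show ?thesis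
    using pos neg(2) upper(2) by (simp add: c_def)
qed

theorem lemma1:
  fixes n :: nat and a :: real
  assumes "n \<ge> 4" and "a > 1"
    and "\<forall>z. cmod z = 1 \<longrightarrow> f_a n a z \<noteq> 0"
  shows "of_nat (card {z. z \<noteq> 0 \<and> f_a n a z = 0})
         = 2 * (of_nat n - winding_number (f_a n a \<circ> circlepath 0 1) 0) + 1"
proof -
  \<comment> \<open>the argument only needs \<open>n \<ge> 1\<close>\<close>
  have n: "n \<ge> 1" using assms(1) by simp
  let ?e = "below_level n (1 / (a + 1))"
  have "?e i = 1" if "i \<le> n" "even i" for i
    using below_level_even[OF n _ that] assms(2) by simp
  then have "(\<Sum>j<n. (-1) ^ (j+1) * (?e (Suc j) - ?e j)) =
      real n - 2 * (\<Sum>j | j < n \<and> odd j. ?e j) - (if odd n then ?e n else 0)"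
    by (rule alternating_sum_even_ones)
  then have card: "real (card {z. z \<noteq> 0 \<and> f_a n a z = 0}) =
      2 * (real n - (\<Sum>j<n. (-1) ^ (j+1) * (?e (Suc j) - ?e j))) + 1"
    unfolding card_zeros_f_a[OF n assms(2,3)] by simp
  have "of_nat (card {z. z \<noteq> 0 \<and> f_a n a z = 0}) =
      (of_real (2 * (real n - (\<Sum>j<n. (-1) ^ (j+1) * (?e (Suc j) - ?e j))) + 1) :: complex)"
    using arg_cong[where f = "of_real :: real \<Rightarrow> complex", OF card] by simp
  then show ?thesis
    unfolding winding_number_f_a_circle[OF n assms(2,3)] by simp
qed

end
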